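(* Let $\rho$ be a mixed memory over a set $X$ of program variables, and let $A$ be a predicate. For sets $E$ of entangled ghosts and $U$ of unentangled ghosts, write $\rho\models^{E U}A$ for "$\rho\models A$ where $A$ is interpreted as a predicate over $X\cup E\cup U$". Assume $E_1\cup U_1$ and $E_2\cup U_2$ both contain all variables of $\mathrm{fv}(A)\setminus X$ (i.e., $A$, as a predicate over $X\cup E_i\cup U_i$, equals $(X\cup E_i\cup U_i\cap W)\in_q S$ for its set of free variables $W$). Then $\rho\models^{E_1U_1}A$ iff $\rho\models^{E_2U_2}A$.
   Context: Variables have types (sets with a distinguished element $0$) and are of three disjoint kinds: program variables, entangled ghosts, unentangled ghosts. $\ell^2[V]$ is the Hilbert space with orthonormal basis indexed by assignments on $V$ (quantum memories over $V$); $\ell^2[V\cup W]\cong\ell^2[V]\otimes\ell^2[W]$. Mixed memories over $V$ are positive trace-class operators on $\ell^2[V]$; $\mathrm{tr}_W$ is partial trace. A mixed memory over $V\cup W$ is $(V,W)$-separable if it is a convergent sum $\sum_i\rho_i\otimes\rho_i'$ of mixed memories over $V$ and $W$. $\mathrm{supp}\,\rho$ is the closure of the range of $\rho$. A predicate over $V$ is a closed subspace of $\ell^2[V]$; for $W\subseteq V$ and a closed subspace $S\subseteq\ell^2[W]$, $(W\in_q S):=S\otimes\ell^2[V\setminus W]$. Predicates $A$ over $V$ and $A'$ over $W$ are identified when $A\otimes\ell^2[W\setminus V]=A'\otimes\ell^2[V\setminus W]$; "$\mathrm{fv}(A)\subseteq W$" means $A=(W\in_q S)$ for some $S$. For program variables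 $X$, entangled ghosts $E$, unentangled ghosts $U$ and a predicate $A$ over $X\cup E\cup U$, $\rho$ over $X$ satisfies $A$ iff there exists an $(X\cup E,U)$-separable mixed memory $\rho^\circ$ over $X\cup E\cup U$ with $\mathrm{supp}\,\rho^\circ\subseteq A$ and $\mathrm{tr}_{E\cup U}\rho^\circ=\rho$. *)

theory Defs
  imports "HOL-Analysis.Analysis" "HOL-Library.FuncSet"
begin

text \<open>Variables have type 'v, values live in a universal type 'val; the type of a
variable v is the set tp v (a set with a distinguished element; only nonemptiness
matters here). A (classical) memory / assignment over V is an element of
PiE V tp (extensional: undefined outside V).\<close>

datatype vkind = Program | Entangled | Unentangled

type_synonym ('v,'val) mem = "'v \<Rightarrow> 'val"
type_synonym ('v,'val) qvec = "('v,'val) mem \<Rightarrow> complex"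
type_synonym ('v,'val) qop = "('v,'val) mem \<Rightarrow> ('v,'val) mem \<Rightarrow> complex"

definition mems :: "('v \<Rightarrow> 'val set) \<Rightarrow> 'v set \<Rightarrow> ('v,'val) mem set" where
  "mems tp V = PiE V tp"

definition l2 :: "('v \<Rightarrow> 'val set) \<Rightarrow> 'v set \<Rightarrow> ('v,'val) qvec set" where
  "l2 tp V = {\<psi>. (\<forall>m. m \<notin> mems tp V \<longrightarrow> \<psi> m = 0)
                  \<and> (\<lambda>m. (cmod (\<psi> m))^2) summable_on mems tp V}"

definition l2norm :: "('v \<Rightarrow> 'val set) \<Rightarrow> 'v set \<Rightarrow> ('v,'val) qvec \<Rightarrow> real" where
  "l2norm tp V \<psi> = sqrt (infsum (\<lambda>m. (cmod (\<psi> m))^2) (mems tp V))"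

definition l2inner :: "('v \<Rightarrow> 'val set) \<Rightarrow> 'v set \<Rightarrow> ('v,'val) qvec \<Rightarrow> ('v,'val) qvec \<Rightarrow> complex" where
  "l2inner tp V \<phi> \<psi> = infsum (\<lambda>m. cnj (\<phi> m) * \<psi> m) (mems tp V)"

text \<open>Operators on l2[V] are represented by their matrices K m m' = <e_m, K e_m'>
w.r.t. the canonical orthonormal basis (entries vanish outside assignments over V).\<close>
definition qapply :: "('v \<Rightarrow> 'val set) \<Rightarrow> 'v set \<Rightarrow> ('v,'val) qop \<Rightarrow> ('v,'val) qvec \<Rightarrow> ('v,'val) qvec" where
  "qapply tp V K \<psi> = (\<lambda>m. if m \<in> mems tp V then infsum (\<lambda>m'. K m m' * \<psi> m') (mems tp V) else 0)"

text \<open>Mixed memory over V: positive trace-class (bounded) operator on l2[V].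
For positive operators, trace class means the diagonal is summable.\<close>
definition mixed :: "('v \<Rightarrow> 'val set) \<Rightarrow> 'v set \<Rightarrow> ('v,'val) qop \<Rightarrow> bool" where
  "mixed tp V K \<longleftrightarrow>
     (\<forall>m m'. (m \<notin> mems tp V \<or> m' \<notin> mems tp V) \<longrightarrow> K m m' = 0)
   \<and> (\<forall>m. (\<lambda>m'. K m m') \<in> l2 tp V)
   \<and> (\<exists>C. \<forall>\<psi>\<in>l2 tp V. qapply tp V K \<psi> \<in> l2 tp V
                      \<and> l2norm tp V (qapply tp V K \<psi>) \<le> C * l2norm tp V \<psi>)
   \<and> (\<forall>\<psi>\<in>l2 tp V. Im (l2inner tp V \<psi> (qapply tp V K \<psi>)) = 0
                  \<and> Re (l2inner tp V \<psi> (qapply tp V K \<psi>)) \<ge> 0)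
   \<and> (\<lambda>m. Re (K m m)) summable_on mems tp V"

definition merge :: "'v set \<Rightarrow> ('v,'val) mem \<Rightarrow> ('v,'val) mem \<Rightarrow> ('v,'val) mem" where
  "merge V m n = (\<lambda>v. if v \<in> V then m v else n v)"

definition ptrace :: "('v \<Rightarrow> 'val set) \<Rightarrow> 'v set \<Rightarrow> 'v set \<Rightarrow> ('v,'val) qop \<Rightarrow> ('v,'val) qop" where
  "ptrace tp V W K = (\<lambda>m m'. if m \<in> mems tp V \<and> m' \<in> mems tp V
      then infsum (\<lambda>n. K (merge V m n) (merge V m' n)) (mems tp W) else 0)"

definition qtensor :: "('v \<Rightarrow> 'val set) \<Rightarrow> 'v set \<Rightarrow> 'v set \<Rightarrow> ('v,'val) qop \<Rightarrow> ('v,'val) qop \<Rightarrow> ('v,'val) qop" where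
  "qtensor tp V W K K' = (\<lambda>m m'. if m \<in> mems tp (V \<union> W) \<and> m' \<in> mems tp (V \<union> W)
      then K (restrict m V) (restrict m' V) * K' (restrict m W) (restrict m' W) else 0)"

text \<open>Convergence is stated entrywise; for sums of positive operators
converging to a trace-class operator this coincides with trace-norm convergence.\<close>
definition separable :: "('v \<Rightarrow> 'val set) \<Rightarrow> 'v set \<Rightarrow> 'v set \<Rightarrow> ('v,'val) qop \<Rightarrow> bool" where
  "separable tp V W K \<longleftrightarrow> (\<exists>\<rho>s \<rho>s' :: nat \<Rightarrow> ('v,'val) qop.
      (\<forall>i. mixed tp V (\<rho>s i) \<and> mixed tp W (\<rho>s' i))
    \<and> (\<forall>m m'. (\<lambda>i. qtensor tp V W (\<rho>s i) (\<rho>s' i) m m') sums K m m'))"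

definition csubspace :: "('v \<Rightarrow> 'val set) \<Rightarrow> 'v set \<Rightarrow> ('v,'val) qvec set \<Rightarrow> bool" where
  "csubspace tp V S \<longleftrightarrow> S \<subseteq> l2 tp V \<and> (\<lambda>_. 0) \<in> S
    \<and> (\<forall>\<phi>\<in>S. \<forall>\<psi>\<in>S. (\<lambda>m. \<phi> m + \<psi> m) \<in> S)
    \<and> (\<forall>c. \<forall>\<phi>\<in>S. (\<lambda>m. c * \<phi> m) \<in> S)
    \<and> (\<forall>\<psi>\<in>l2 tp V. (\<forall>\<epsilon>>0. \<exists>\<phi>\<in>S. l2norm tp V (\<lambda>m. \<psi> m - \<phi> m) < \<epsilon>) \<longrightarrow> \<psi> \<in> S)"

definition supp :: "('v \<Rightarrow> 'val set) \<Rightarrow> 'v set \<Rightarrow> ('v,'val) qop \<Rightarrow> ('v,'val) qvec set" where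
  "supp tp V K = {\<psi>\<in>l2 tp V. \<forall>\<epsilon>>0. \<exists>\<phi>\<in>l2 tp V.
       l2norm tp V (\<lambda>m. \<psi> m - qapply tp V K \<phi> m) < \<epsilon>}"

text \<open>(W \<in>q S) as a predicate over V (W \<subseteq> V, S closed subspace of l2[W]):
S \<otimes> l2[V - W], the closed span of the product vectors.\<close>
definition qin :: "('v \<Rightarrow> 'val set) \<Rightarrow> 'v set \<Rightarrow> 'v set \<Rightarrow> ('v,'val) qvec set \<Rightarrow> ('v,'val) qvec set" where
  "qin tp V W S = \<Inter>{T. csubspace tp V T \<and>
      (\<forall>\<phi>\<in>S. \<forall>\<xi>\<in>l2 tp (V - W).
         (\<lambda>m. if m \<in> mems tp V then \<phi> (restrict m W) * \<xi> (restrict m (V - W)) else 0) \<in> T)}"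

definition satisfies :: "('v \<Rightarrow> 'val set) \<Rightarrow> 'v set \<Rightarrow> 'v set \<Rightarrow> 'v set \<Rightarrow> ('v,'val) qvec set \<Rightarrow> ('v,'val) qop \<Rightarrow> bool" where
  "satisfies tp X E U A \<rho> \<longleftrightarrow> (\<exists>\<rho>o. mixed tp (X \<union> E \<union> U) \<rho>o
      \<and> separable tp (X \<union> E) U \<rho>o
      \<and> supp tp (X \<union> E \<union> U) \<rho>o \<subseteq> A
      \<and> ptrace tp X (E \<union> U) \<rho>o = \<rho>)"

end

(* Ghost variables that do not occur in the predicate can be added and removed at will.
   To add variables G, tensor the witness rho_o with the pure state |c><c| of some classical
   assignment c of G: positivity, the partial trace and separability are preserved (the new
   factor can be attached to either side of the bipartition), and the range of rho_o (x) |c><c| is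
   range(rho_o) (x) e_c, so the support stays inside (W in_q S). To remove G, trace it out: the
   partial trace of a positive trace-class operator is again one, it commutes with the convergent
   sum witnessing separability, and each of its columns is an l2-limit of finite sums of slices
   <e_n| of columns of rho_o; these lie in (W in_q S) because the predicate only constrains W and
   G does not meet W. Hence satisfaction over ghosts E, U is equivalent to satisfaction over
   E inter W and U inter W, and these sets do not depend on the choice of E, U because the kinds
   of variables are disjoint and W - X is covered by E union U. *)

theory Submission
  imports Defs
begin

section \<open>Infinite sums\<close>

lemma summable_on_infsum_cong_has_sum:
  assumes "\<And>s. (f has_sum s) A \<longleftrightarrow> (g has_sum s) B"
  shows "f summable_on A \<longleftrightarrow> g summable_on B" and "infsum f A = infsum g B"
  using assms by (metis summable_on_def, metis has_sum_infsum infsumI infsum_not_exists summable_on_def)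

lemma infsum_finite_support:
  assumes "finite F" "F \<subseteq> A" "\<And>x. x \<in> A \<Longrightarrow> x \<notin> F \<Longrightarrow> f x = 0"
  shows "infsum f A = sum f F"
  using infsum_cong_neutral[of F A f f] assms by auto

lemma
  fixes f g :: "'a \<Rightarrow> real"
  assumes sf: "(\<lambda>x. (f x)\<^sup>2) summable_on A" and sg: "(\<lambda>x. (g x)\<^sup>2) summable_on A"
    and f0: "\<And>x. x \<in> A \<Longrightarrow> f x \<ge> 0" and g0: "\<And>x. x \<in> A \<Longrightarrow> g x \<ge> 0"
  shows cauchy_schwarz_summable_on_real: "(\<lambda>x. f x * g x) summable_on A"
    and cauchy_schwarz_infsum_real:
      "infsum (\<lambda>x. f x * g x) A \<le> sqrt (infsum (\<lambda>x. (f x)\<^sup>2) A) * sqrt (infsum (\<lambda>x. (g x)\<^sup>2) A)"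
proof -
  let ?B = "sqrt (infsum (\<lambda>x. (f x)\<^sup>2) A) * sqrt (infsum (\<lambda>x. (g x)\<^sup>2) A)"
  have fin: "sum (\<lambda>x. f x * g x) F \<le> ?B" if "finite F" "F \<subseteq> A" for F
  proof -
    have "sum (\<lambda>x. f x * g x) F = (\<Sum>x\<in>F. \<bar>f x\<bar> * \<bar>g x\<bar>)"
      using that f0 g0 by (intro sum.cong) auto
    also have "\<dots> \<le> L2_set f F * L2_set g F" by (rule L2_set_mult_ineq)
    also have "\<dots> \<le> ?B"
      unfolding L2_set_def
      by (intro mult_mono real_sqrt_le_mono finite_sum_le_infsum sf sg that)
         (auto intro: infsum_nonneg sum_nonneg)
    finally show ?thesis .
  qed
  show s: "(\<lambda>x. f x * g x) summable_on A"
    by (rule nonneg_bdd_above_summable_on) (use f0 g0 fin in \<open>auto intro!: bdd_aboveI[where M="?B"]\<close>)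
  show "infsum (\<lambda>x. f x * g x) A \<le> ?B"
    by (rule infsum_le_finite_sums[OF s fin])
qed

lemma
  fixes a b :: "'a \<Rightarrow> complex"
  assumes sa: "(\<lambda>x. (cmod (a x))\<^sup>2) summable_on A" and sb: "(\<lambda>x. (cmod (b x))\<^sup>2) summable_on A"
  shows cauchy_schwarz_summable_on: "(\<lambda>x. a x * b x) summable_on A"
    and cauchy_schwarz_infsum:
      "cmod (infsum (\<lambda>x. a x * b x) A) \<le> sqrt (infsum (\<lambda>x. (cmod (a x))\<^sup>2) A) * sqrt (infsum (\<lambda>x. (cmod (b x))\<^sup>2) A)"
proof -
  note cs = cauchy_schwarz_summable_on_real[OF sa sb] cauchy_schwarz_infsum_real[OF sa sb]
  have s: "(\<lambda>x. norm (a x * b x)) summable_on A" using cs(1) by (simp add: norm_mult)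
  then show "(\<lambda>x. a x * b x) summable_on A"
    by (rule abs_summable_summable)
  have "cmod (infsum (\<lambda>x. a x * b x) A) \<le> infsum (\<lambda>x. norm (a x * b x)) A"
    by (rule norm_infsum_bound[OF s])
  also have "\<dots> \<le> sqrt (infsum (\<lambda>x. (cmod (a x))\<^sup>2) A) * sqrt (infsum (\<lambda>x. (cmod (b x))\<^sup>2) A)"
    using cs(2) by (simp add: norm_mult)
  finally show "cmod (infsum (\<lambda>x. a x * b x) A) \<le> \<dots>" .
qed

lemma summable_on_product_nonneg:
  fixes g h :: "_ \<Rightarrow> real"
  assumes g: "g summable_on A" and h: "h summable_on B"
    and g0: "\<And>x. x \<in> A \<Longrightarrow> g x \<ge> 0" and h0: "\<And>y. y \<in> B \<Longrightarrow> h y \<ge> 0"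
  shows "(\<lambda>(x,y). g x * h y) summable_on A \<times> B"
proof -
  have "(\<lambda>p. g (fst p) * h (snd p)) summable_on Sigma A (\<lambda>_. B)"
    by (rule summable_on_SigmaI[where g="\<lambda>x. g x * infsum h B"])
       (use has_sum_cmult_right[OF has_sum_infsum[OF h]] summable_on_cmult_left[OF g] g0 h0 in auto)
  then show ?thesis by (simp add: case_prod_beta')
qed

lemma infsum_Sigma_triple:
  fixes f :: "'a \<times> 'b \<times> 'c \<Rightarrow> 'd::{banach,uniform_topological_group_add}"
  assumes s: "f summable_on A \<times> (B \<times> C)"
  shows "infsum f (A \<times> (B \<times> C)) = infsum (\<lambda>a. infsum (\<lambda>b. infsum (\<lambda>c. f (a,(b,c))) C) B) A"
proof -
  have "infsum (\<lambda>a. infsum (\<lambda>b. infsum (\<lambda>c. f (a,(b,c))) C) B) A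
      = infsum (\<lambda>a. infsum (\<lambda>bc. f (a,bc)) (B \<times> C)) A"
  proof (rule infsum_cong)
    fix a assume "a \<in> A"
    then have "(\<lambda>(b,c). f (a,(b,c))) summable_on B \<times> C"
      using summable_on_SigmaD1[of "\<lambda>a bc. f (a,bc)" A "\<lambda>_. B \<times> C"] s by (simp add: case_prod_beta')
    from infsum_Sigma'_banach[OF this]
    show "infsum (\<lambda>b. infsum (\<lambda>c. f (a,(b,c))) C) B = infsum (\<lambda>bc. f (a,bc)) (B \<times> C)"
      by (simp add: case_prod_beta')
  qed
  also have "\<dots> = infsum f (A \<times> (B \<times> C))"
    using infsum_Sigma'_banach[of "\<lambda>a bc. f (a,bc)" A "\<lambda>_. B \<times> C"] s by simp
  finally show ?thesis by simp
qed

lemma infsum_triple_rotate: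
  fixes f :: "'a \<times> 'b \<times> 'c \<Rightarrow> 'd::{banach,uniform_topological_group_add}"
  assumes s: "f summable_on A \<times> (B \<times> C)"
  shows "infsum (\<lambda>a. infsum (\<lambda>b. infsum (\<lambda>c. f (a,(b,c))) C) B) A
       = infsum (\<lambda>c. infsum (\<lambda>a. infsum (\<lambda>b. f (a,(b,c))) B) A) C"
proof -
  define g where "g = (\<lambda>(c,(a,b)). f (a,(b,c)))"
  have rot: "bij_betw (\<lambda>(c,(a,b)). (a,(b,c))) (C \<times> (A \<times> B)) (A \<times> (B \<times> C))"
    by (rule bij_betwI[where g="\<lambda>(a,(b,c)). (c,(a,b))"]) auto
  have "g summable_on C \<times> (A \<times> B)" "infsum g (C \<times> (A \<times> B)) = infsum f (A \<times> (B \<times> C))"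
    using summable_on_reindex_bij_betw[OF rot, of f] infsum_reindex_bij_betw[OF rot, of f] s
    unfolding g_def by (simp_all add: case_prod_beta')
  then show ?thesis
    using infsum_Sigma_triple[OF s] infsum_Sigma_triple[of g] unfolding g_def by simp
qed

lemma sums_infsum_interchange:
  fixes T :: "nat \<Rightarrow> 'a \<Rightarrow> complex"
  assumes sT: "\<And>g. g \<in> A \<Longrightarrow> (\<lambda>i. T i g) sums k g"
    and B: "(\<lambda>(g,i). B g i) summable_on A \<times> UNIV" and bd: "\<And>g i. g \<in> A \<Longrightarrow> cmod (T i g) \<le> B g i"
  shows "(\<lambda>i. infsum (T i) A) sums infsum k A"
proof -
  have s: "(\<lambda>(g,i). T i g) summable_on A \<times> UNIV"
    by (rule abs_summable_summable, rule Infinite_Sum.abs_summable_on_comparison_test'[OF B])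
       (use bd in auto)
  have kg: "infsum (\<lambda>i. T i g) UNIV = k g" if g: "g \<in> A" for g
  proof -
    have "(\<lambda>i. T i g) summable_on UNIV"
      using summable_on_SigmaD1[of "\<lambda>g i. T i g" A "\<lambda>_. UNIV", OF _ g] s by simp
    then show ?thesis using sT[OF g] sums_unique2 has_sum_imp_sums[OF has_sum_infsum] by blast
  qed
  have "(\<lambda>i. infsum (T i) A) summable_on UNIV"
    using summable_on_Sigma_banach[of "\<lambda>i g. T i g" UNIV "\<lambda>_. A"]
      summable_on_swap[of "\<lambda>(g,i). T i g" A UNIV] s by (simp add: case_prod_beta')
  then have "(\<lambda>i. infsum (T i) A) sums infsum (\<lambda>i. infsum (T i) A) UNIV"
    by (rule has_sum_imp_sums[OF has_sum_infsum])
  also have "infsum (\<lambda>i. infsum (T i) A) UNIV = infsum k A"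
    using infsum_swap_banach[of "\<lambda>g i. T i g" A UNIV] s kg by (simp cong: infsum_cong)
  finally show ?thesis .
qed

lemma has_sum_diff:
  fixes f g :: "_ \<Rightarrow> 'b::topological_ab_group_add"
  assumes "(f has_sum a) A" "(g has_sum b) A"
  shows "((\<lambda>x. f x - g x) has_sum (a - b)) A"
proof -
  have "((\<lambda>x. - g x) has_sum - b) A" using has_sum_uminus[where f=g and a="-b" and A=A] assms(2) by simp
  from has_sum_add[OF assms(1) this] show ?thesis by simp
qed

lemma infsum_diff:
  fixes f g :: "_ \<Rightarrow> 'b::{topological_ab_group_add,t2_space}"
  assumes "f summable_on A" "g summable_on A"
  shows "infsum (\<lambda>x. f x - g x) A = infsum f A - infsum g A"
  by (rule infsumI, rule has_sum_diff) (use assms in auto)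

lemma has_sum_Diff_finite:
  fixes f :: "_ \<Rightarrow> 'b::{topological_ab_group_add,t2_space}"
  assumes "(f has_sum s) A" "finite F" "F \<subseteq> A"
  shows "(f has_sum (s - sum f F)) (A - F)"
proof -
  have "((\<lambda>x. if x \<in> F then f x else 0) has_sum sum f F) A"
    by (rule has_sum_cong_neutral[THEN iffD1, OF _ _ _ has_sum_finite[OF assms(2)]])
       (use assms(3) in auto)
  from has_sum_diff[OF assms(1) this] show ?thesis
    by (rule has_sum_cong_neutral[THEN iffD1, rotated -1]) auto
qed

lemma small_infsum_tail:
  fixes h :: "_ \<Rightarrow> real"
  assumes h: "h summable_on A" and e: "e > 0"
  obtains F where "finite F" "F \<subseteq> A" "infsum h (A - F) < e"
proof -
  obtain F where F: "finite F" "F \<subseteq> A" "dist (sum h F) (infsum h A) \<le> e/2"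
    using infsum_finite_approximation[OF h, of "e/2"] e by auto
  have "infsum h (A - F) = infsum h A - sum h F"
    by (rule infsumI[OF has_sum_Diff_finite[OF has_sum_infsum[OF h] F(1,2)]])
  also have "\<dots> < e" using F(3) e unfolding dist_real_def abs_le_iff by linarith
  finally show ?thesis using F that by blast
qed

section \<open>Assignments and sums over them\<close>

lemma mems_iff: "m \<in> mems tp V \<longleftrightarrow> (\<forall>v\<in>V. m v \<in> tp v) \<and> (\<forall>v. v \<notin> V \<longrightarrow> m v = undefined)"
  unfolding mems_def PiE_def extensional_def by auto

lemma ex_in_mems: "\<forall>v. tp v \<noteq> {} \<Longrightarrow> \<exists>c. c \<in> mems tp V"
  unfolding mems_def by (metis PiE_eq_empty_iff ex_in_conv)

lemma merge_in_mems: "a \<in> mems tp V \<Longrightarrow> b \<in> mems tp G \<Longrightarrow> merge V a b \<in> mems tp (V \<union> G)"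
  unfolding mems_iff merge_def by auto

lemma restrict_in_mems: "m \<in> mems tp V \<Longrightarrow> A \<subseteq> V \<Longrightarrow> restrict m A \<in> mems tp A"
  unfolding mems_iff restrict_def by auto

lemma restrict_merge_left: "a \<in> mems tp V \<Longrightarrow> restrict (merge V a b) V = a"
  unfolding mems_iff merge_def restrict_def by auto

lemma restrict_merge_right: "b \<in> mems tp G \<Longrightarrow> V \<inter> G = {} \<Longrightarrow> restrict (merge V a b) G = b"
  unfolding mems_iff merge_def restrict_def by (auto intro!: ext)

lemma restrict_merge_disjoint: "V \<inter> G = {} \<Longrightarrow> restrict (merge V a b) G = restrict b G"
  unfolding merge_def restrict_def by (rule ext) auto

lemma merge_restrict: "m \<in> mems tp (V \<union> G) \<Longrightarrow> merge V (restrict m V) (restrict m G) = m"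
  unfolding mems_iff merge_def restrict_def by (auto intro!: ext)

lemma merge_assoc: "merge X m (merge R r c) = merge (X \<union> R) (merge X m r) c"
  unfolding merge_def by (rule ext) auto

lemma bij_betw_merge:
  assumes "V \<inter> G = {}"
  shows "bij_betw (\<lambda>(a,b). merge V a b) (mems tp V \<times> mems tp G) (mems tp (V \<union> G))"
  by (rule bij_betwI[where g="\<lambda>m. (restrict m V, restrict m G)"])
     (use assms in \<open>auto simp: merge_in_mems restrict_in_mems restrict_merge_left
        restrict_merge_right merge_restrict\<close>)

lemma inj_on_merge_fixed: "inj_on (\<lambda>a. merge V a c) (mems tp V)"
  by (rule inj_onI) (metis restrict_merge_left)

context
  fixes tp :: "'v \<Rightarrow> 'val set" and V G :: "'v set"
  assumes disj: "V \<inter> G = {}"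
begin

lemma has_sum_merge_iff:
  "((\<lambda>(a,b). f (merge V a b)) has_sum s) (mems tp V \<times> mems tp G) \<longleftrightarrow> (f has_sum s) (mems tp (V \<union> G))"
  using has_sum_reindex_bij_betw[OF bij_betw_merge[OF disj], of f] by (simp add: case_prod_beta')

lemma summable_on_merge_iff:
  "(\<lambda>(a,b). f (merge V a b)) summable_on (mems tp V \<times> mems tp G) \<longleftrightarrow> f summable_on mems tp (V \<union> G)"
  and infsum_merge: "infsum (\<lambda>(a,b). f (merge V a b)) (mems tp V \<times> mems tp G) = infsum f (mems tp (V \<union> G))"
  using summable_on_infsum_cong_has_sum[OF has_sum_merge_iff] by blast+

lemma
  fixes f :: "_ \<Rightarrow> 'b::{banach,uniform_topological_group_add}"
  assumes "f summable_on mems tp (V \<union> G)"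
  shows summable_on_merge_iterated: "(\<lambda>a. infsum (\<lambda>b. f (merge V a b)) (mems tp G)) summable_on mems tp V"
    and infsum_merge_iterated:
      "infsum (\<lambda>a. infsum (\<lambda>b. f (merge V a b)) (mems tp G)) (mems tp V) = infsum f (mems tp (V \<union> G))"
    and summable_on_merge_slice: "a \<in> mems tp V \<Longrightarrow> (\<lambda>b. f (merge V a b)) summable_on mems tp G"
proof -
  have s: "(\<lambda>(a,b). f (merge V a b)) summable_on (mems tp V \<times> mems tp G)"
    using summable_on_merge_iff assms by blast
  show "(\<lambda>a. infsum (\<lambda>b. f (merge V a b)) (mems tp G)) summable_on mems tp V"
    using summable_on_Sigma_banach[OF s] by simp
  show "infsum (\<lambda>a. infsum (\<lambda>b. f (merge V a b)) (mems tp G)) (mems tp V) = infsum f (mems tp (V \<union> G))"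
    using infsum_Sigma'_banach[OF s] infsum_merge[of f] by simp
  show "(\<lambda>b. f (merge V a b)) summable_on mems tp G" if "a \<in> mems tp V"
    using summable_on_SigmaD1[OF s that] by simp
qed

lemma has_sum_merge_fixed_iff:
  assumes c: "c \<in> mems tp G"
    and zero: "\<And>m. m \<in> mems tp (V \<union> G) \<Longrightarrow> restrict m G \<noteq> c \<Longrightarrow> f m = 0"
  shows "((\<lambda>a. f (merge V a c)) has_sum s) (mems tp V) \<longleftrightarrow> (f has_sum s) (mems tp (V \<union> G))"
proof -
  let ?S = "(\<lambda>a. merge V a c) ` mems tp V"
  have "((\<lambda>a. f (merge V a c)) has_sum s) (mems tp V) \<longleftrightarrow> (f has_sum s) ?S"
    using has_sum_reindex[OF inj_on_merge_fixed, of f] by (simp add: comp_def)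
  also have "\<dots> \<longleftrightarrow> (f has_sum s) (mems tp (V \<union> G))"
  proof (rule has_sum_cong_neutral)
    show "f m = 0" if m: "m \<in> mems tp (V \<union> G) - ?S" for m
    proof (rule zero)
      have "restrict m V \<in> mems tp V" using m restrict_in_mems[of m tp "V \<union> G" V] by blast
      then show "restrict m G \<noteq> c" using m merge_restrict[of m tp V G] by force
    qed (use m in blast)
    show "f m = 0" if "m \<in> ?S - mems tp (V \<union> G)" for m
      using that merge_in_mems[OF _ c] by blast
  qed simp
  finally show ?thesis .
qed

lemma
  assumes "c \<in> mems tp G"
    and "\<And>m. m \<in> mems tp (V \<union> G) \<Longrightarrow> restrict m G \<noteq> c \<Longrightarrow> f m = 0"
  shows summable_on_merge_fixed_iff:
      "(\<lambda>a. f (merge V a c)) summable_on mems tp V \<longleftrightarrow> f summable_on mems tp (V \<union> G)"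
    and infsum_merge_fixed: "infsum (\<lambda>a. f (merge V a c)) (mems tp V) = infsum f (mems tp (V \<union> G))"
  using summable_on_infsum_cong_has_sum[OF has_sum_merge_fixed_iff[where f=f, OF assms]] by blast+

end

lemma
  fixes f :: "_ \<Rightarrow> real"
  assumes f: "f summable_on mems tp (V \<union> G)" and c: "c \<in> mems tp G" and f0: "\<And>m. f m \<ge> 0"
  shows summable_on_merge_fixed: "(\<lambda>a. f (merge V a c)) summable_on mems tp V"
    and infsum_merge_fixed_le: "infsum (\<lambda>a. f (merge V a c)) (mems tp V) \<le> infsum f (mems tp (V \<union> G))"
proof -
  let ?S = "(\<lambda>a. merge V a c) ` mems tp V"
  have sub: "?S \<subseteq> mems tp (V \<union> G)" using merge_in_mems[OF _ c] by blast
  have s: "f summable_on ?S" by (rule summable_on_subset[OF f sub])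
  show "(\<lambda>a. f (merge V a c)) summable_on mems tp V"
    using summable_on_reindex[OF inj_on_merge_fixed, of f] s by (simp add: comp_def)
  have "infsum (\<lambda>a. f (merge V a c)) (mems tp V) = infsum f ?S"
    using infsum_reindex[OF inj_on_merge_fixed, of f] by (simp add: comp_def)
  also have "\<dots> \<le> infsum f (mems tp (V \<union> G))"
    by (rule infsum_mono_neutral[OF s f]) (use sub f0 in auto)
  finally show "infsum (\<lambda>a. f (merge V a c)) (mems tp V) \<le> infsum f (mems tp (V \<union> G))" .
qed

section \<open>The spaces \<open>\<ell>\<^sup>2[V]\<close> and their closed subspaces\<close>

lemma l2_summable: "\<psi> \<in> l2 tp V \<Longrightarrow> (\<lambda>m. (cmod (\<psi> m))\<^sup>2) summable_on mems tp V"
  unfolding l2_def by blast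

lemma l2_outside: "\<psi> \<in> l2 tp V \<Longrightarrow> m \<notin> mems tp V \<Longrightarrow> \<psi> m = 0"
  unfolding l2_def by blast

lemma l2I:
  "(\<And>m. m \<notin> mems tp V \<Longrightarrow> \<psi> m = 0) \<Longrightarrow> (\<lambda>m. (cmod (\<psi> m))\<^sup>2) summable_on mems tp V \<Longrightarrow> \<psi> \<in> l2 tp V"
  unfolding l2_def by blast

lemma l2norm_nonneg: "l2norm tp V \<psi> \<ge> 0"
  unfolding l2norm_def by (simp add: infsum_nonneg)

lemma l2norm_power2: "(l2norm tp V \<psi>)\<^sup>2 = infsum (\<lambda>m. (cmod (\<psi> m))\<^sup>2) (mems tp V)"
  unfolding l2norm_def by (simp add: infsum_nonneg)

lemma l2norm_less: "infsum (\<lambda>m. (cmod (\<psi> m))\<^sup>2) (mems tp V) < e\<^sup>2 \<Longrightarrow> e > 0 \<Longrightarrow> l2norm tp V \<psi> < e"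
  unfolding l2norm_def using real_sqrt_less_mono by fastforce

lemma l2_zero: "(\<lambda>_. 0) \<in> l2 tp V"
  by (rule l2I) auto

lemma l2_add:
  assumes "\<phi> \<in> l2 tp V" "\<psi> \<in> l2 tp V"
  shows "(\<lambda>m. \<phi> m + \<psi> m) \<in> l2 tp V"
proof (rule l2I)
  show "\<phi> m + \<psi> m = 0" if "m \<notin> mems tp V" for m
    using that by (simp add: l2_outside[OF assms(1)] l2_outside[OF assms(2)])
  have bound: "(cmod (\<phi> m + \<psi> m))\<^sup>2 \<le> 2 * (cmod (\<phi> m))\<^sup>2 + 2 * (cmod (\<psi> m))\<^sup>2" for m
  proof -
    have "(cmod (\<phi> m + \<psi> m))\<^sup>2 \<le> (cmod (\<phi> m) + cmod (\<psi> m))\<^sup>2"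
      by (rule power_mono[OF norm_triangle_ineq norm_ge_zero])
    also have "\<dots> \<le> 2 * (cmod (\<phi> m))\<^sup>2 + 2 * (cmod (\<psi> m))\<^sup>2"
      using sum_squares_bound[of "cmod (\<phi> m)" "cmod (\<psi> m)"] by (simp add: power2_sum)
    finally show ?thesis .
  qed
  have "(\<lambda>m. 2 * (cmod (\<phi> m))\<^sup>2 + 2 * (cmod (\<psi> m))\<^sup>2) summable_on mems tp V"
    by (intro summable_on_add summable_on_cmult_right l2_summable assms)
  then show "(\<lambda>m. (cmod (\<phi> m + \<psi> m))\<^sup>2) summable_on mems tp V"
    by (rule summable_on_comparison_test) (use bound in auto)
qed

lemma l2_scale:
  assumes "\<phi> \<in> l2 tp V"
  shows "(\<lambda>m. c * \<phi> m) \<in> l2 tp V"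
proof (rule l2I)
  show "c * \<phi> m = 0" if "m \<notin> mems tp V" for m using l2_outside[OF assms that] by simp
  show "(\<lambda>m. (cmod (c * \<phi> m))\<^sup>2) summable_on mems tp V"
    using summable_on_cmult_right[OF l2_summable[OF assms], of "(cmod c)\<^sup>2"]
    by (simp add: norm_mult power_mult_distrib)
qed

lemma l2_diff: "\<phi> \<in> l2 tp V \<Longrightarrow> \<psi> \<in> l2 tp V \<Longrightarrow> (\<lambda>m. \<phi> m - \<psi> m) \<in> l2 tp V"
  using l2_add[OF _ l2_scale[of \<psi> tp V "-1"], of \<phi>] by simp

lemma l2_finite_support:
  assumes "finite F" "F \<subseteq> mems tp V" "\<And>m. m \<notin> F \<Longrightarrow> \<psi> m = 0"
  shows "\<psi> \<in> l2 tp V"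
proof (rule l2I)
  show "(\<lambda>m. (cmod (\<psi> m))\<^sup>2) summable_on mems tp V"
    by (rule summable_on_cong_neutral[THEN iffD1, OF _ _ _ summable_on_finite[OF assms(1)]])
       (use assms in auto)
qed (use assms in blast)

lemma l2_truncation_approx:
  assumes \<phi>: "\<phi> \<in> l2 tp V" and \<delta>: "\<delta> > 0"
  obtains F where "finite F" "F \<subseteq> mems tp V"
    "l2norm tp V (\<lambda>m. \<phi> m - (if m \<in> F then \<phi> m else 0)) < \<delta>"
proof -
  obtain F where F: "finite F" "F \<subseteq> mems tp V"
    and tail: "infsum (\<lambda>m. (cmod (\<phi> m))\<^sup>2) (mems tp V - F) < \<delta>\<^sup>2"
    using small_infsum_tail[OF l2_summable[OF \<phi>], of "\<delta>\<^sup>2"] \<delta> by auto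
  have "infsum (\<lambda>m. (cmod (\<phi> m - (if m \<in> F then \<phi> m else 0)))\<^sup>2) (mems tp V)
      = infsum (\<lambda>m. (cmod (\<phi> m))\<^sup>2) (mems tp V - F)"
    by (rule infsum_cong_neutral) auto
  then have "l2norm tp V (\<lambda>m. \<phi> m - (if m \<in> F then \<phi> m else 0)) < \<delta>"
    using tail by (intro l2norm_less[OF _ \<delta>]) simp
  with F that show ?thesis by blast
qed

lemma qapply_finite_support:
  assumes "finite F" "F \<subseteq> mems tp V" "\<And>m. m \<notin> F \<Longrightarrow> \<psi> m = 0" "m \<in> mems tp V"
  shows "qapply tp V K \<psi> m = (\<Sum>m'\<in>F. K m m' * \<psi> m')"
  unfolding qapply_def using assms infsum_finite_support[OF assms(1,2), of "\<lambda>m'. K m m' * \<psi> m'"] by simp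

lemma quadratic_form_finite_support:
  assumes "finite F" "F \<subseteq> mems tp V" "\<And>m. m \<notin> F \<Longrightarrow> \<psi> m = 0"
  shows "l2inner tp V \<psi> (qapply tp V K \<psi>) = (\<Sum>m\<in>F. \<Sum>m'\<in>F. cnj (\<psi> m) * K m m' * \<psi> m')"
proof -
  have "l2inner tp V \<psi> (qapply tp V K \<psi>) = (\<Sum>m\<in>F. cnj (\<psi> m) * qapply tp V K \<psi> m)"
    unfolding l2inner_def by (rule infsum_finite_support[OF assms(1,2)]) (simp add: assms(3))
  also have "\<dots> = (\<Sum>m\<in>F. \<Sum>m'\<in>F. cnj (\<psi> m) * K m m' * \<psi> m')"
    using assms(2) by (intro sum.cong) (auto simp: qapply_finite_support[OF assms] sum_distrib_left mult.assoc)
  finally show ?thesis .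
qed

lemma csubspaceI:
  assumes "T \<subseteq> l2 tp V" "(\<lambda>_. 0) \<in> T"
    "\<And>\<phi> \<psi>. \<phi> \<in> T \<Longrightarrow> \<psi> \<in> T \<Longrightarrow> (\<lambda>m. \<phi> m + \<psi> m) \<in> T"
    "\<And>c \<phi>. \<phi> \<in> T \<Longrightarrow> (\<lambda>m. c * \<phi> m) \<in> T"
    "\<And>\<psi>. \<psi> \<in> l2 tp V \<Longrightarrow> (\<And>\<epsilon>. \<epsilon> > 0 \<Longrightarrow> \<exists>\<phi>\<in>T. l2norm tp V (\<lambda>m. \<psi> m - \<phi> m) < \<epsilon>) \<Longrightarrow> \<psi> \<in> T"
  shows "csubspace tp V T"
  unfolding csubspace_def using assms by blast

lemma
  assumes "csubspace tp V T"
  shows csubspace_l2: "T \<subseteq> l2 tp V"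
    and csubspace_zero: "(\<lambda>_. 0) \<in> T"
    and csubspace_add: "\<phi> \<in> T \<Longrightarrow> \<psi> \<in> T \<Longrightarrow> (\<lambda>m. \<phi> m + \<psi> m) \<in> T"
    and csubspace_scale: "\<phi> \<in> T \<Longrightarrow> (\<lambda>m. c * \<phi> m) \<in> T"
    and csubspace_closed:
      "\<psi> \<in> l2 tp V \<Longrightarrow> (\<And>\<epsilon>. \<epsilon> > 0 \<Longrightarrow> \<exists>\<phi>\<in>T. l2norm tp V (\<lambda>m. \<psi> m - \<phi> m) < \<epsilon>) \<Longrightarrow> \<psi> \<in> T"
  using assms unfolding csubspace_def by blast+

lemma csubspace_sum:
  assumes T: "csubspace tp V T" and "finite F" and "\<And>i. i \<in> F \<Longrightarrow> f i \<in> T"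
  shows "(\<lambda>m. \<Sum>i\<in>F. f i m) \<in> T"
  using assms(2,3) by (induction F rule: finite_induct) (auto intro: csubspace_zero[OF T] csubspace_add[OF T])

lemma l2_csubspace: "csubspace tp V (l2 tp V)"
  by (rule csubspaceI) (auto intro: l2_zero l2_add l2_scale)

lemma csubspace_Inter:
  assumes "\<F> \<noteq> {}" "\<And>T. T \<in> \<F> \<Longrightarrow> csubspace tp V T"
  shows "csubspace tp V (\<Inter>\<F>)"
proof (rule csubspaceI)
  show "\<psi> \<in> \<Inter>\<F>"
    if "\<psi> \<in> l2 tp V" "\<And>\<epsilon>. \<epsilon> > 0 \<Longrightarrow> \<exists>\<phi>\<in>\<Inter>\<F>. l2norm tp V (\<lambda>m. \<psi> m - \<phi> m) < \<epsilon>" for \<psi>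
  proof (rule InterI)
    fix T assume T: "T \<in> \<F>"
    show "\<psi> \<in> T" by (rule csubspace_closed[OF assms(2)[OF T] that(1)]) (use that(2) T in blast)
  qed
  show "\<Inter>\<F> \<subseteq> l2 tp V" using assms csubspace_l2 by blast
  show "(\<lambda>_. 0) \<in> \<Inter>\<F>" using assms(2) csubspace_zero by blast
  show "(\<lambda>m. \<phi> m + \<psi> m) \<in> \<Inter>\<F>" if "\<phi> \<in> \<Inter>\<F>" "\<psi> \<in> \<Inter>\<F>" for \<phi> \<psi>
    using that assms(2) csubspace_add by blast
  show "(\<lambda>m. c * \<phi> m) \<in> \<Inter>\<F>" if "\<phi> \<in> \<Inter>\<F>" for c \<phi>
    using that assms(2) csubspace_scale by blast
qed

lemma csubspace_preimage:
  assumes T: "csubspace tp V' T"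
    and L_l2: "\<And>\<psi>. \<psi> \<in> l2 tp V \<Longrightarrow> L \<psi> \<in> l2 tp V'"
    and L_add: "\<And>\<phi> \<psi>. L (\<lambda>m. \<phi> m + \<psi> m) = (\<lambda>m. L \<phi> m + L \<psi> m)"
    and L_scale: "\<And>a \<phi>. L (\<lambda>m. a * \<phi> m) = (\<lambda>m. a * L \<phi> m)"
    and L_norm: "\<And>\<psi>. \<psi> \<in> l2 tp V \<Longrightarrow> l2norm tp V' (L \<psi>) \<le> l2norm tp V \<psi>"
  shows "csubspace tp V {\<psi> \<in> l2 tp V. L \<psi> \<in> T}"
proof (rule csubspaceI)
  have L_diff: "L (\<lambda>m. \<psi> m - \<phi> m) = (\<lambda>m. L \<psi> m - L \<phi> m)" for \<psi> \<phi>
    using L_add[of \<psi> "\<lambda>m. (-1) * \<phi> m"] L_scale[of "-1" \<phi>] by simp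
  show "(\<lambda>_. 0) \<in> {\<psi> \<in> l2 tp V. L \<psi> \<in> T}"
    using L_scale[of 0 "\<lambda>_. 0"] l2_zero csubspace_zero[OF T] by simp
  show "(\<lambda>m. \<phi> m + \<psi> m) \<in> {\<psi> \<in> l2 tp V. L \<psi> \<in> T}"
    if "\<phi> \<in> {\<psi> \<in> l2 tp V. L \<psi> \<in> T}" "\<psi> \<in> {\<psi> \<in> l2 tp V. L \<psi> \<in> T}" for \<phi> \<psi>
    using that by (simp add: L_add l2_add csubspace_add[OF T])
  show "(\<lambda>m. a * \<phi> m) \<in> {\<psi> \<in> l2 tp V. L \<psi> \<in> T}" if "\<phi> \<in> {\<psi> \<in> l2 tp V. L \<psi> \<in> T}" for a \<phi>
    using that by (simp add: L_scale l2_scale csubspace_scale[OF T])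
  show "\<psi> \<in> {\<psi> \<in> l2 tp V. L \<psi> \<in> T}"
    if \<psi>: "\<psi> \<in> l2 tp V" and approx: "\<And>\<epsilon>. \<epsilon> > 0 \<Longrightarrow> \<exists>\<phi>\<in>{\<psi> \<in> l2 tp V. L \<psi> \<in> T}. l2norm tp V (\<lambda>m. \<psi> m - \<phi> m) < \<epsilon>"
    for \<psi>
  proof -
    have "L \<psi> \<in> T"
    proof (rule csubspace_closed[OF T L_l2[OF \<psi>]])
      fix \<epsilon> :: real assume "\<epsilon> > 0"
      then obtain \<phi> where \<phi>: "\<phi> \<in> l2 tp V" "L \<phi> \<in> T" and close: "l2norm tp V (\<lambda>m. \<psi> m - \<phi> m) < \<epsilon>"
        using approx by blast
      have "l2norm tp V' (\<lambda>m. L \<psi> m - L \<phi> m) \<le> l2norm tp V (\<lambda>m. \<psi> m - \<phi> m)"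
        using L_norm[OF l2_diff[OF \<psi> \<phi>(1)]] by (simp add: L_diff)
      then show "\<exists>\<phi>'\<in>T. l2norm tp V' (\<lambda>m. L \<psi> m - \<phi>' m) < \<epsilon>" using \<phi>(2) close by force
    qed
    with \<psi> show ?thesis by blast
  qed
qed simp

definition qprod :: "('v \<Rightarrow> 'val set) \<Rightarrow> 'v set \<Rightarrow> 'v set \<Rightarrow> ('v,'val) qvec \<Rightarrow> ('v,'val) qvec \<Rightarrow> ('v,'val) qvec" where
  "qprod tp V W \<phi> \<xi> = (\<lambda>m. if m \<in> mems tp V then \<phi> (restrict m W) * \<xi> (restrict m (V - W)) else 0)"

lemma qin_qprod: "qin tp V W S = \<Inter>{T. csubspace tp V T \<and> (\<forall>\<phi>\<in>S. \<forall>\<xi>\<in>l2 tp (V - W). qprod tp V W \<phi> \<xi> \<in> T)}"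
  unfolding qin_def qprod_def ..

lemma qprod_in_qin: "\<phi> \<in> S \<Longrightarrow> \<xi> \<in> l2 tp (V - W) \<Longrightarrow> qprod tp V W \<phi> \<xi> \<in> qin tp V W S"
  unfolding qin_qprod by blast

lemma qin_least:
  "csubspace tp V T \<Longrightarrow> (\<And>\<phi> \<xi>. \<phi> \<in> S \<Longrightarrow> \<xi> \<in> l2 tp (V - W) \<Longrightarrow> qprod tp V W \<phi> \<xi> \<in> T) \<Longrightarrow>
    qin tp V W S \<subseteq> T"
  unfolding qin_qprod by blast

lemma qprod_l2:
  assumes W: "W \<subseteq> V" and \<phi>: "\<phi> \<in> l2 tp W" and \<xi>: "\<xi> \<in> l2 tp (V - W)"
  shows "qprod tp V W \<phi> \<xi> \<in> l2 tp V"
proof (rule l2I)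
  show "qprod tp V W \<phi> \<xi> m = 0" if "m \<notin> mems tp V" for m using that unfolding qprod_def by simp
  have VW: "W \<union> (V - W) = V" and dj: "W \<inter> (V - W) = {}" using W by blast+
  let ?f = "\<lambda>m. (cmod (qprod tp V W \<phi> \<xi> m))\<^sup>2"
  have "(\<lambda>(a,b). (cmod (\<phi> a))\<^sup>2 * (cmod (\<xi> b))\<^sup>2) summable_on mems tp W \<times> mems tp (V - W)"
    by (rule summable_on_product_nonneg[OF l2_summable[OF \<phi>] l2_summable[OF \<xi>]]) auto
  then have "(\<lambda>(a,b). ?f (merge W a b)) summable_on mems tp W \<times> mems tp (V - W)"
    by (rule summable_on_cong[THEN iffD1, rotated])
       (use VW dj in \<open>auto simp: qprod_def norm_mult power_mult_distrib merge_in_mems[of _ tp W _ "V - W", simplified VW]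
          restrict_merge_left restrict_merge_right\<close>)
  then show "?f summable_on mems tp V"
    using summable_on_merge_iff[OF dj, of ?f] VW by simp
qed

lemma csubspace_qin:
  assumes "W \<subseteq> V" "S \<subseteq> l2 tp W"
  shows "csubspace tp V (qin tp V W S)"
  unfolding qin_qprod using assms
  by (intro csubspace_Inter) (auto intro!: exI[of _ "l2 tp V"] l2_csubspace qprod_l2)

section \<open>Mixed memories\<close>

lemma psd_2x2_off_diag:
  fixes p q :: real and x y :: complex
  assumes H: "\<And>\<alpha> \<beta> :: complex.
      Im (cnj \<alpha> * (of_real p * \<alpha> + x * \<beta>) + cnj \<beta> * (y * \<alpha> + of_real q * \<beta>)) = 0 \<and>
      Re (cnj \<alpha> * (of_real p * \<alpha> + x * \<beta>) + cnj \<beta> * (y * \<alpha> + of_real q * \<beta>)) \<ge> 0"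
  shows "(cmod x)\<^sup>2 \<le> p * q"
proof -
  have y: "y = cnj x" using H[of 1 1] H[of 1 \<i>] by (simp add: complex_eq_iff)
  have p: "p \<ge> 0" and q: "q \<ge> 0" using H[of 1 0] H[of 0 1] by simp_all
  have F: "0 \<le> p * t\<^sup>2 - 2 * t * (cmod x)\<^sup>2 + q * (cmod x)\<^sup>2" for t
    using H[of "of_real t" "- cnj x"] unfolding y cmod_power2 by (simp add: algebra_simps power2_eq_square)
  have G: "0 \<le> q * t\<^sup>2 - 2 * t * (cmod x)\<^sup>2 + p * (cmod x)\<^sup>2" for t
    using H[of "- x" "of_real t"] unfolding y cmod_power2 by (simp add: algebra_simps power2_eq_square)
  consider "q > 0" | "p > 0" | "p = 0" "q = 0" using p q by linarith
  then show ?thesis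
  proof cases
    case 1
    then show ?thesis using F[of q] by (simp add: power2_eq_square algebra_simps)
  next
    case 2
    then show ?thesis using G[of p] by (simp add: power2_eq_square algebra_simps)
  next
    case 3
    then show ?thesis using F[of 1] by simp
  qed
qed

lemma mixed_outside: "mixed tp V K \<Longrightarrow> m \<notin> mems tp V \<or> m' \<notin> mems tp V \<Longrightarrow> K m m' = 0"
  unfolding mixed_def by blast

lemma mixed_row_l2: "mixed tp V K \<Longrightarrow> (\<lambda>m'. K m m') \<in> l2 tp V"
  unfolding mixed_def by blast

lemma mixed_bounded:
  "mixed tp V K \<Longrightarrow>
    \<exists>C. \<forall>\<psi>\<in>l2 tp V. qapply tp V K \<psi> \<in> l2 tp V \<and> l2norm tp V (qapply tp V K \<psi>) \<le> C * l2norm tp V \<psi>"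
  unfolding mixed_def by blast

lemma mixed_positive:
  "mixed tp V K \<Longrightarrow> \<psi> \<in> l2 tp V \<Longrightarrow>
    Im (l2inner tp V \<psi> (qapply tp V K \<psi>)) = 0 \<and> Re (l2inner tp V \<psi> (qapply tp V K \<psi>)) \<ge> 0"
  unfolding mixed_def by blast

lemma mixed_diag_summable: "mixed tp V K \<Longrightarrow> (\<lambda>m. Re (K m m)) summable_on mems tp V"
  unfolding mixed_def by blast

lemma
  assumes K: "mixed tp V K"
  shows mixed_diag_real: "K a a = of_real (Re (K a a))"
    and mixed_diag_nonneg: "Re (K a a) \<ge> 0"
proof -
  have "Im (K a a) = 0 \<and> Re (K a a) \<ge> 0"
  proof (cases "a \<in> mems tp V")
    case True
    define \<psi> where "\<psi> = (\<lambda>m. if m = a then 1 else 0 :: complex)"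
    have F: "finite {a}" "{a} \<subseteq> mems tp V" "\<And>m. m \<notin> {a} \<Longrightarrow> \<psi> m = 0"
      using True by (auto simp: \<psi>_def)
    have "l2inner tp V \<psi> (qapply tp V K \<psi>) = K a a"
      using quadratic_form_finite_support[where \<psi>=\<psi>, OF F] by (simp add: \<psi>_def)
    then show ?thesis using mixed_positive[OF K l2_finite_support[where \<psi>=\<psi>, OF F]] by simp
  qed (simp add: mixed_outside[OF K])
  then show "K a a = of_real (Re (K a a))" "Re (K a a) \<ge> 0" by (auto simp: complex_eq_iff)
qed

lemma mixed_entry_le_sqrt:
  assumes K: "mixed tp V K"
  shows "cmod (K a b) \<le> sqrt (Re (K a a)) * sqrt (Re (K b b))"
proof -
  have "(cmod (K a b))\<^sup>2 \<le> Re (K a a) * Re (K b b)"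
  proof (cases "a \<in> mems tp V \<and> b \<in> mems tp V \<and> a \<noteq> b")
    case True
    show ?thesis
    proof (rule psd_2x2_off_diag[where y="K b a"])
      fix \<alpha> \<beta> :: complex
      define \<psi> where "\<psi> = (\<lambda>m. if m = a then \<alpha> else if m = b then \<beta> else 0)"
      have F: "finite {a,b}" "{a,b} \<subseteq> mems tp V" "\<And>m. m \<notin> {a,b} \<Longrightarrow> \<psi> m = 0"
        using True by (auto simp: \<psi>_def)
      have "l2inner tp V \<psi> (qapply tp V K \<psi>) =
          cnj \<alpha> * (K a a * \<alpha> + K a b * \<beta>) + cnj \<beta> * (K b a * \<alpha> + K b b * \<beta>)"
        using quadratic_form_finite_support[where \<psi>=\<psi>, OF F] True
        by (simp add: \<psi>_def algebra_simps not_sym[of a b])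
      then show "Im (cnj \<alpha> * (of_real (Re (K a a)) * \<alpha> + K a b * \<beta>) + cnj \<beta> * (K b a * \<alpha> + of_real (Re (K b b)) * \<beta>)) = 0 \<and>
          Re (cnj \<alpha> * (of_real (Re (K a a)) * \<alpha> + K a b * \<beta>) + cnj \<beta> * (K b a * \<alpha> + of_real (Re (K b b)) * \<beta>)) \<ge> 0"
        using mixed_positive[OF K l2_finite_support[where \<psi>=\<psi>, OF F]]
        by (simp flip: mixed_diag_real[OF K])
    qed
  next
    case False
    then consider "K a b = 0" | "b = a" using mixed_outside[OF K] by blast
    then show ?thesis
    proof cases
      case 2
      have "cmod (K a a) = Re (K a a)"
        by (metis abs_of_nonneg norm_of_real mixed_diag_real[OF K] mixed_diag_nonneg[OF K])
      then show ?thesis using 2 by (simp add: power2_eq_square)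
    qed (simp add: mixed_diag_nonneg[OF K])
  qed
  then show ?thesis
    using real_sqrt_le_mono by (fastforce simp: real_sqrt_mult)
qed

lemma mixed_entry_le_average:
  assumes K: "mixed tp V K"
  shows "cmod (K a b) \<le> (Re (K a a) + Re (K b b)) / 2"
  using mixed_entry_le_sqrt[OF K, of a b] arith_geo_mean_sqrt[OF mixed_diag_nonneg[OF K, of a] mixed_diag_nonneg[OF K, of b]]
  by (simp add: real_sqrt_mult)

lemma mixed_entry_weighted_le:
  assumes K: "mixed tp V K"
  shows "cmod (cnj \<alpha> * K a b * \<beta>) \<le> (cmod \<alpha>)\<^sup>2 * Re (K b b) + (cmod \<beta>)\<^sup>2 * Re (K a a)"
proof -
  let ?x = "cmod \<alpha> * sqrt (Re (K b b))" and ?y = "cmod \<beta> * sqrt (Re (K a a))"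
  have "cmod (cnj \<alpha> * K a b * \<beta>) \<le> cmod \<alpha> * (sqrt (Re (K a a)) * sqrt (Re (K b b))) * cmod \<beta>"
    unfolding norm_mult complex_mod_cnj by (intro mult_right_mono mult_left_mono mixed_entry_le_sqrt[OF K]) auto
  also have "\<dots> = ?x * ?y" by (simp add: algebra_simps)
  also have "\<dots> \<le> ?x\<^sup>2 + ?y\<^sup>2" using sum_squares_bound[of ?x ?y] zero_le_power2[of ?x] zero_le_power2[of ?y] by linarith
  also have "\<dots> = (cmod \<alpha>)\<^sup>2 * Re (K b b) + (cmod \<beta>)\<^sup>2 * Re (K a a)"
    by (simp add: power_mult_distrib mixed_diag_nonneg[OF K])
  finally show ?thesis .
qed

text \<open>Domination by a summable diagonal makes \<open>K\<close> Hilbert-Schmidt; this supplies the boundedness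
  required by \<^const>\<open>mixed\<close> (see \<open>mixedI\<close>).\<close>

context
  fixes tp :: "'v \<Rightarrow> 'val set" and V :: "'v set" and K :: "('v,'val) qop" and D :: "('v,'val) mem \<Rightarrow> real"
  assumes outside: "\<And>m m'. m \<notin> mems tp V \<or> m' \<notin> mems tp V \<Longrightarrow> K m m' = 0"
    and D_nonneg: "\<And>m. D m \<ge> 0" and D_summable: "D summable_on mems tp V"
    and entry_bound: "\<And>a b. cmod (K a b) \<le> sqrt (D a) * sqrt (D b)"
begin

lemma entry_power2_le_of_entry_bound: "(cmod (K m m'))\<^sup>2 \<le> D m * D m'"
  using power_mono[OF entry_bound norm_ge_zero, of m m' 2] D_nonneg by (simp add: power_mult_distrib)

lemma
  shows row_l2_of_entry_bound: "(\<lambda>m'. K m m') \<in> l2 tp V"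
    and row_norm_le_of_entry_bound:
      "infsum (\<lambda>m'. (cmod (K m m'))\<^sup>2) (mems tp V) \<le> D m * infsum D (mems tp V)"
proof -
  have rows: "(\<lambda>m'. (cmod (K m m'))\<^sup>2) summable_on mems tp V"
    by (rule summable_on_comparison_test[OF summable_on_cmult_right[OF D_summable, of "D m"]])
       (use entry_power2_le_of_entry_bound in auto)
  then show "(\<lambda>m'. K m m') \<in> l2 tp V"
    by (intro l2I) (use outside in auto)
  have "infsum (\<lambda>m'. (cmod (K m m'))\<^sup>2) (mems tp V) \<le> infsum (\<lambda>m'. D m * D m') (mems tp V)"
    by (rule infsum_mono[OF rows summable_on_cmult_right[OF D_summable]]) (use entry_power2_le_of_entry_bound in auto)
  then show "infsum (\<lambda>m'. (cmod (K m m'))\<^sup>2) (mems tp V) \<le> D m * infsum D (mems tp V)"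
    by (simp add: infsum_cmult_right')
qed

lemma column_l2_of_entry_bound: "(\<lambda>m. K m m') \<in> l2 tp V"
  by (intro l2I summable_on_comparison_test[OF summable_on_cmult_left[OF D_summable, of "D m'"]])
     (use outside entry_power2_le_of_entry_bound in auto)

lemma qapply_l2_of_entry_bound:
  assumes \<psi>: "\<psi> \<in> l2 tp V"
  shows "qapply tp V K \<psi> \<in> l2 tp V \<and> l2norm tp V (qapply tp V K \<psi>) \<le> infsum D (mems tp V) * l2norm tp V \<psi>"
proof -
  let ?T = "infsum D (mems tp V)" and ?N = "infsum (\<lambda>m. (cmod (\<psi> m))\<^sup>2) (mems tp V)"
  have T0: "?T \<ge> 0" using D_nonneg by (simp add: infsum_nonneg)
  have N0: "?N \<ge> 0" by (rule infsum_nonneg) simp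
  have pointwise: "(cmod (qapply tp V K \<psi> m))\<^sup>2 \<le> D m * (?T * ?N)" for m
  proof (cases "m \<in> mems tp V")
    case True
    have "cmod (qapply tp V K \<psi> m) \<le> sqrt (infsum (\<lambda>m'. (cmod (K m m'))\<^sup>2) (mems tp V)) * sqrt ?N"
      unfolding qapply_def using True
      by (simp add: cauchy_schwarz_infsum l2_summable[OF row_l2_of_entry_bound] l2_summable[OF \<psi>])
    also have "\<dots> \<le> sqrt (D m * ?T) * sqrt ?N"
      by (intro mult_right_mono real_sqrt_le_mono row_norm_le_of_entry_bound) (simp add: N0)
    finally have "(cmod (qapply tp V K \<psi> m))\<^sup>2 \<le> (sqrt (D m * ?T) * sqrt ?N)\<^sup>2"
      by (rule power_mono) simp
    then show ?thesis using D_nonneg[of m] T0 N0 by (simp add: power_mult_distrib mult.assoc)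
  qed (simp add: qapply_def D_nonneg T0 N0)
  have s: "(\<lambda>m. (cmod (qapply tp V K \<psi> m))\<^sup>2) summable_on mems tp V"
    by (rule summable_on_comparison_test[OF summable_on_cmult_left[OF D_summable]]) (use pointwise in auto)
  have "(l2norm tp V (qapply tp V K \<psi>))\<^sup>2 \<le> infsum (\<lambda>m. D m * (?T * ?N)) (mems tp V)"
    unfolding l2norm_power2
    by (rule infsum_mono[OF s summable_on_cmult_left[OF D_summable]]) (use pointwise in auto)
  also have "\<dots> = (?T * l2norm tp V \<psi>)\<^sup>2"
    unfolding power_mult_distrib l2norm_power2 by (simp add: infsum_cmult_left' power2_eq_square)
  finally have "l2norm tp V (qapply tp V K \<psi>) \<le> ?T * l2norm tp V \<psi>"
    using T0 l2norm_nonneg by (meson mult_nonneg_nonneg power2_le_imp_le)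
  moreover have "qapply tp V K \<psi> \<in> l2 tp V" by (rule l2I[OF _ s]) (simp add: qapply_def)
  ultimately show ?thesis by blast
qed

end

lemma mixedI:
  assumes outside: "\<And>m m'. m \<notin> mems tp V \<or> m' \<notin> mems tp V \<Longrightarrow> K m m' = 0"
    and diag_nonneg: "\<And>m. Re (K m m) \<ge> 0"
    and diag_summable: "(\<lambda>m. Re (K m m)) summable_on mems tp V"
    and entry_bound: "\<And>a b. cmod (K a b) \<le> sqrt (Re (K a a)) * sqrt (Re (K b b))"
    and positive: "\<And>\<psi>. \<psi> \<in> l2 tp V \<Longrightarrow>
      Im (l2inner tp V \<psi> (qapply tp V K \<psi>)) = 0 \<and> Re (l2inner tp V \<psi> (qapply tp V K \<psi>)) \<ge> 0"
  shows "mixed tp V K"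
  unfolding mixed_def
  using row_l2_of_entry_bound[OF outside diag_nonneg diag_summable entry_bound]
    qapply_l2_of_entry_bound[OF outside diag_nonneg diag_summable entry_bound] outside diag_summable positive
  by blast

lemma qapply_diff:
  assumes R: "mixed tp V R" and "\<phi> \<in> l2 tp V" "\<psi> \<in> l2 tp V"
  shows "qapply tp V R (\<lambda>m. \<phi> m - \<psi> m) = (\<lambda>m. qapply tp V R \<phi> m - qapply tp V R \<psi> m)"
proof -
  have "(\<lambda>m'. R m m' * \<zeta> m') summable_on mems tp V" if "\<zeta> \<in> l2 tp V" for m \<zeta>
    by (rule cauchy_schwarz_summable_on[OF l2_summable[OF mixed_row_l2[OF R]] l2_summable[OF that]])
  then show ?thesis
    unfolding qapply_def using assms by (auto simp: right_diff_distrib infsum_diff)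
qed

section \<open>Tensoring with a classical assignment\<close>

text \<open>For \<open>c \<in> mems tp G\<close>, \<open>liftvec tp V G c \<xi>\<close> is \<open>\<xi> \<otimes> e\<^sub>c\<close>, \<open>liftop tp V G c K\<close> is \<open>K \<otimes> |e\<^sub>c\<rangle>\<langle>e\<^sub>c|\<close>,
  and \<open>slicev tp V n \<psi>\<close> is the partial inner product \<open>(id \<otimes> \<langle>e\<^sub>n|) \<psi>\<close>.\<close>

definition liftvec :: "('v \<Rightarrow> 'val set) \<Rightarrow> 'v set \<Rightarrow> 'v set \<Rightarrow> ('v,'val) mem \<Rightarrow> ('v,'val) qvec \<Rightarrow> ('v,'val) qvec" where
  "liftvec tp V G c \<xi> = (\<lambda>m. if m \<in> mems tp (V \<union> G) \<and> restrict m G = c then \<xi> (restrict m V) else 0)"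

definition slicev :: "('v \<Rightarrow> 'val set) \<Rightarrow> 'v set \<Rightarrow> ('v,'val) mem \<Rightarrow> ('v,'val) qvec \<Rightarrow> ('v,'val) qvec" where
  "slicev tp V n \<psi> = (\<lambda>m. if m \<in> mems tp V then \<psi> (merge V m n) else 0)"

definition liftop :: "('v \<Rightarrow> 'val set) \<Rightarrow> 'v set \<Rightarrow> 'v set \<Rightarrow> ('v,'val) mem \<Rightarrow> ('v,'val) qop \<Rightarrow> ('v,'val) qop" where
  "liftop tp V G c K = (\<lambda>m m'.
      if m \<in> mems tp (V \<union> G) \<and> m' \<in> mems tp (V \<union> G) \<and> restrict m G = c \<and> restrict m' G = c
      then K (restrict m V) (restrict m' V) else 0)"

lemma liftvec_linear:
  "liftvec tp V G c (\<lambda>m. \<phi> m + \<psi> m) = (\<lambda>m. liftvec tp V G c \<phi> m + liftvec tp V G c \<psi> m)"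
  "liftvec tp V G c (\<lambda>m. a * \<phi> m) = (\<lambda>m. a * liftvec tp V G c \<phi> m)"
  unfolding liftvec_def by auto

lemma slicev_linear:
  "slicev tp V n (\<lambda>m. \<phi> m + \<psi> m) = (\<lambda>m. slicev tp V n \<phi> m + slicev tp V n \<psi> m)"
  "slicev tp V n (\<lambda>m. a * \<phi> m) = (\<lambda>m. a * slicev tp V n \<phi> m)"
  unfolding slicev_def by auto

lemma
  assumes n: "n \<in> mems tp G" and \<psi>: "\<psi> \<in> l2 tp (V \<union> G)"
  shows slicev_l2: "slicev tp V n \<psi> \<in> l2 tp V"
    and l2norm_slicev_le: "l2norm tp V (slicev tp V n \<psi>) \<le> l2norm tp (V \<union> G) \<psi>"
proof -
  have eq: "(\<lambda>m. (cmod (slicev tp V n \<psi> m))\<^sup>2) = (\<lambda>m. if m \<in> mems tp V then (cmod (\<psi> (merge V m n)))\<^sup>2 else 0)"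
    by (auto simp: slicev_def)
  note summable = summable_on_merge_fixed[OF l2_summable[OF \<psi>] n]
    and le = infsum_merge_fixed_le[OF l2_summable[OF \<psi>] n]
  show "slicev tp V n \<psi> \<in> l2 tp V"
    by (rule l2I) (use summable in \<open>auto simp: slicev_def eq cong: summable_on_cong\<close>)
  show "l2norm tp V (slicev tp V n \<psi>) \<le> l2norm tp (V \<union> G) \<psi>"
    unfolding l2norm_def eq using le by (simp cong: infsum_cong)
qed

context
  fixes tp :: "'v \<Rightarrow> 'val set" and V G :: "'v set" and c :: "('v,'val) mem"
  assumes disj: "V \<inter> G = {}" and c: "c \<in> mems tp G"
begin

lemma liftvec_merge: "a \<in> mems tp V \<Longrightarrow> liftvec tp V G c \<xi> (merge V a c) = \<xi> a"
  unfolding liftvec_def by (simp add: merge_in_mems[OF _ c] restrict_merge_left restrict_merge_right[OF c disj])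

lemma liftop_merge:
  "a \<in> mems tp V \<Longrightarrow> b \<in> mems tp V \<Longrightarrow> liftop tp V G c K (merge V a c) (merge V b c) = K a b"
  unfolding liftop_def by (simp add: merge_in_mems[OF _ c] restrict_merge_left restrict_merge_right[OF c disj])

lemma l2norm_liftvec: "l2norm tp (V \<union> G) (liftvec tp V G c \<xi>) = l2norm tp V \<xi>"
proof -
  have "infsum (\<lambda>m. (cmod (liftvec tp V G c \<xi> m))\<^sup>2) (mems tp (V \<union> G))
      = infsum (\<lambda>a. (cmod (liftvec tp V G c \<xi> (merge V a c)))\<^sup>2) (mems tp V)"
    by (rule infsum_merge_fixed[OF disj c, symmetric]) (simp add: liftvec_def)
  then show ?thesis unfolding l2norm_def by (simp add: liftvec_merge cong: infsum_cong)
qed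

lemma liftvec_l2: "\<xi> \<in> l2 tp V \<Longrightarrow> liftvec tp V G c \<xi> \<in> l2 tp (V \<union> G)"
proof (rule l2I)
  assume "\<xi> \<in> l2 tp V"
  then have "(\<lambda>a. (cmod (liftvec tp V G c \<xi> (merge V a c)))\<^sup>2) summable_on mems tp V"
    using l2_summable by (simp add: liftvec_merge cong: summable_on_cong)
  then show "(\<lambda>m. (cmod (liftvec tp V G c \<xi> m))\<^sup>2) summable_on mems tp (V \<union> G)"
    by (rule summable_on_merge_fixed_iff[OF disj c, THEN iffD1, rotated]) (simp add: liftvec_def)
qed (simp add: liftvec_def)

lemma l2inner_liftvec: "l2inner tp (V \<union> G) \<psi> (liftvec tp V G c \<xi>) = l2inner tp V (slicev tp V c \<psi>) \<xi>"
proof -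
  have "l2inner tp (V \<union> G) \<psi> (liftvec tp V G c \<xi>)
      = infsum (\<lambda>a. cnj (\<psi> (merge V a c)) * liftvec tp V G c \<xi> (merge V a c)) (mems tp V)"
    unfolding l2inner_def by (rule infsum_merge_fixed[OF disj c, symmetric]) (simp add: liftvec_def)
  then show ?thesis
    unfolding l2inner_def by (simp add: slicev_def liftvec_merge cong: infsum_cong)
qed

lemma qapply_liftop:
  "qapply tp (V \<union> G) (liftop tp V G c K) \<psi> = liftvec tp V G c (qapply tp V K (slicev tp V c \<psi>))"
proof
  fix m
  show "qapply tp (V \<union> G) (liftop tp V G c K) \<psi> m = liftvec tp V G c (qapply tp V K (slicev tp V c \<psi>)) m"
  proof (cases "m \<in> mems tp (V \<union> G) \<and> restrict m G = c")
    case True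
    have "qapply tp (V \<union> G) (liftop tp V G c K) \<psi> m
        = infsum (\<lambda>m'. liftop tp V G c K m m' * \<psi> m') (mems tp (V \<union> G))"
      unfolding qapply_def using True by simp
    also have "\<dots> = infsum (\<lambda>a. liftop tp V G c K m (merge V a c) * \<psi> (merge V a c)) (mems tp V)"
      by (rule infsum_merge_fixed[OF disj c, symmetric]) (simp add: liftop_def)
    also have "\<dots> = infsum (\<lambda>a. K (restrict m V) a * slicev tp V c \<psi> a) (mems tp V)"
      using True by (intro infsum_cong)
        (simp add: liftop_def slicev_def merge_in_mems[OF _ c] restrict_merge_left restrict_merge_right[OF c disj])
    finally show ?thesis
      unfolding liftvec_def qapply_def using True restrict_in_mems[of m tp "V \<union> G" V] by simp
  qed (auto simp: qapply_def liftvec_def liftop_def)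
qed

lemma mixed_liftop:
  assumes K: "mixed tp V K"
  shows "mixed tp (V \<union> G) (liftop tp V G c K)"
proof (rule mixedI)
  let ?L = "liftop tp V G c K"
  show "?L m m' = 0" if "m \<notin> mems tp (V \<union> G) \<or> m' \<notin> mems tp (V \<union> G)" for m m'
    using that unfolding liftop_def by auto
  show "Re (?L m m) \<ge> 0" for m
    unfolding liftop_def using mixed_diag_nonneg[OF K] by simp
  have "(\<lambda>a. Re (?L (merge V a c) (merge V a c))) summable_on mems tp V"
    using mixed_diag_summable[OF K] by (simp add: liftop_merge cong: summable_on_cong)
  then show "(\<lambda>m. Re (?L m m)) summable_on mems tp (V \<union> G)"
    by (rule summable_on_merge_fixed_iff[OF disj c, THEN iffD1, rotated]) (simp add: liftop_def)
  show "cmod (?L a b) \<le> sqrt (Re (?L a a)) * sqrt (Re (?L b b))" for a b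
    unfolding liftop_def using mixed_entry_le_sqrt[OF K] by auto
  show "Im (l2inner tp (V \<union> G) \<psi> (qapply tp (V \<union> G) ?L \<psi>)) = 0 \<and>
      Re (l2inner tp (V \<union> G) \<psi> (qapply tp (V \<union> G) ?L \<psi>)) \<ge> 0" if "\<psi> \<in> l2 tp (V \<union> G)" for \<psi>
    unfolding qapply_liftop l2inner_liftvec
    using mixed_positive[OF K slicev_l2[OF c that]] by simp
qed

end

context
  fixes tp :: "'v \<Rightarrow> 'val set" and V G W :: "'v set"
  assumes disj: "V \<inter> G = {}" and WV: "W \<subseteq> V"
begin

lemma liftvec_qprod:
  assumes c: "c \<in> mems tp G"
  shows "liftvec tp V G c (qprod tp V W \<phi> \<eta>) = qprod tp (V \<union> G) W \<phi> (liftvec tp (V - W) G c \<eta>)"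
proof
  fix m
  show "liftvec tp V G c (qprod tp V W \<phi> \<eta>) m = qprod tp (V \<union> G) W \<phi> (liftvec tp (V - W) G c \<eta>) m"
  proof (cases "m \<in> mems tp (V \<union> G)")
    case True
    have "(V \<union> G) - W = (V - W) \<union> G" using disj WV by blast
    then have "restrict m V \<in> mems tp V" "restrict m ((V \<union> G) - W) \<in> mems tp ((V - W) \<union> G)"
      using restrict_in_mems[OF True, of V] restrict_in_mems[OF True, of "V \<union> G - W"] by auto
    moreover have "restrict (restrict m V) W = restrict m W" "restrict (restrict m V) (V - W) = restrict m (V - W)"
      "restrict (restrict m (V \<union> G - W)) G = restrict m G"
      "restrict (restrict m (V \<union> G - W)) (V - W) = restrict m (V - W)"
      using disj WV by (auto simp: restrict_def intro!: ext; blast)+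
    ultimately show ?thesis unfolding liftvec_def qprod_def using True by (simp del: restrict_restrict)
  qed (simp add: liftvec_def qprod_def)
qed

lemma slicev_qprod:
  assumes n: "n \<in> mems tp G"
  shows "slicev tp V n (qprod tp (V \<union> G) W \<phi> \<eta>) = qprod tp V W \<phi> (slicev tp (V - W) n \<eta>)"
proof
  fix a
  show "slicev tp V n (qprod tp (V \<union> G) W \<phi> \<eta>) a = qprod tp V W \<phi> (slicev tp (V - W) n \<eta>) a"
  proof (cases "a \<in> mems tp V")
    case True
    have "restrict (merge V a n) W = restrict a W"
      using WV unfolding restrict_def merge_def by (auto intro!: ext)
    moreover have "restrict (merge V a n) ((V \<union> G) - W) = merge (V - W) (restrict a (V - W)) n"
    proof
      fix v
      have "v \<notin> G \<Longrightarrow> n v = undefined" and "v \<in> G \<Longrightarrow> v \<notin> V \<and> v \<notin> W"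
        using n disj WV unfolding mems_iff by auto
      then show "restrict (merge V a n) ((V \<union> G) - W) v = merge (V - W) (restrict a (V - W)) n v"
        unfolding restrict_def merge_def by (cases "v \<in> G") auto
    qed
    ultimately show ?thesis
      unfolding slicev_def qprod_def
      using True merge_in_mems[OF True n] restrict_in_mems[OF True, of "V - W"] by simp
  qed (simp add: slicev_def qprod_def)
qed

context
  fixes S :: "('v,'val) qvec set"
  assumes S: "S \<subseteq> l2 tp W"
begin

lemma liftvec_qin:
  assumes c: "c \<in> mems tp G" and \<xi>: "\<xi> \<in> qin tp V W S"
  shows "liftvec tp V G c \<xi> \<in> qin tp (V \<union> G) W S"
proof -
  have UD: "(V \<union> G) - W = (V - W) \<union> G" and "(V - W) \<inter> G = {}" using disj WV by blast+
  have "qin tp V W S \<subseteq> {\<zeta> \<in> l2 tp V. liftvec tp V G c \<zeta> \<in> qin tp (V \<union> G) W S}"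
  proof (rule qin_least)
    show "csubspace tp V {\<zeta> \<in> l2 tp V. liftvec tp V G c \<zeta> \<in> qin tp (V \<union> G) W S}"
      by (rule csubspace_preimage[OF csubspace_qin])
        (use WV S in \<open>auto simp: liftvec_l2[OF disj c] liftvec_linear l2norm_liftvec[OF disj c]\<close>)
    show "qprod tp V W \<phi> \<eta> \<in> {\<zeta> \<in> l2 tp V. liftvec tp V G c \<zeta> \<in> qin tp (V \<union> G) W S}"
      if "\<phi> \<in> S" "\<eta> \<in> l2 tp (V - W)" for \<phi> \<eta>
      using that S WV liftvec_l2[OF \<open>(V - W) \<inter> G = {}\<close> c, of \<eta>]
      by (auto simp: liftvec_qprod[OF c] UD intro!: qprod_l2 qprod_in_qin)
  qed
  then show ?thesis using \<xi> by blast
qed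

lemma slicev_qin:
  assumes n: "n \<in> mems tp G" and \<zeta>: "\<zeta> \<in> qin tp (V \<union> G) W S"
  shows "slicev tp V n \<zeta> \<in> qin tp V W S"
proof -
  have UD: "(V \<union> G) - W = (V - W) \<union> G" using disj WV by blast
  have "qin tp (V \<union> G) W S \<subseteq> {\<psi> \<in> l2 tp (V \<union> G). slicev tp V n \<psi> \<in> qin tp V W S}"
  proof (rule qin_least)
    show "csubspace tp (V \<union> G) {\<psi> \<in> l2 tp (V \<union> G). slicev tp V n \<psi> \<in> qin tp V W S}"
      by (rule csubspace_preimage[OF csubspace_qin])
        (use WV S in \<open>auto simp: slicev_l2[OF n] slicev_linear l2norm_slicev_le[OF n]\<close>)
    show "qprod tp (V \<union> G) W \<phi> \<eta> \<in> {\<psi> \<in> l2 tp (V \<union> G). slicev tp V n \<psi> \<in> qin tp V W S}"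
      if "\<phi> \<in> S" "\<eta> \<in> l2 tp ((V \<union> G) - W)" for \<phi> \<eta>
      using that S WV slicev_l2[OF n, where V="V - W" and \<psi>=\<eta>]
      by (auto simp: slicev_qprod[OF n] UD intro!: qprod_l2 qprod_in_qin)
  qed
  then show ?thesis using \<zeta> by blast
qed

end

end

section \<open>Supports\<close>

lemma qapply_in_supp:
  assumes K: "mixed tp V K" and \<phi>: "\<phi> \<in> l2 tp V"
  shows "qapply tp V K \<phi> \<in> supp tp V K"
proof -
  have "qapply tp V K \<phi> \<in> l2 tp V" using mixed_bounded[OF K] \<phi> by blast
  moreover have "l2norm tp V (\<lambda>m. qapply tp V K \<phi> m - qapply tp V K \<phi> m) = 0"
    unfolding l2norm_def by simp
  ultimately show ?thesis unfolding supp_def using \<phi> by force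
qed

lemma supp_subset_csubspace:
  assumes T: "csubspace tp V T" and range: "\<And>\<phi>. \<phi> \<in> l2 tp V \<Longrightarrow> qapply tp V K \<phi> \<in> T"
  shows "supp tp V K \<subseteq> T"
proof
  fix \<psi> assume "\<psi> \<in> supp tp V K"
  then have \<psi>: "\<psi> \<in> l2 tp V"
    and approx: "\<And>\<epsilon>. \<epsilon> > 0 \<Longrightarrow> \<exists>\<phi>\<in>l2 tp V. l2norm tp V (\<lambda>m. \<psi> m - qapply tp V K \<phi> m) < \<epsilon>"
    unfolding supp_def by blast+
  show "\<psi> \<in> T" by (rule csubspace_closed[OF T \<psi>]) (use approx range in blast)
qed

lemma column_in_supp:
  assumes K: "mixed tp V K" and b: "b \<in> mems tp V"
  shows "(\<lambda>x. K x b) \<in> supp tp V K"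
proof -
  define e where "e = (\<lambda>x. if x = b then 1 else 0 :: complex)"
  have F: "finite {b}" "{b} \<subseteq> mems tp V" "\<And>x. x \<notin> {b} \<Longrightarrow> e x = 0" using b by (auto simp: e_def)
  have "qapply tp V K e = (\<lambda>x. K x b)"
  proof
    fix x show "qapply tp V K e x = K x b"
    proof (cases "x \<in> mems tp V")
      case True
      then show ?thesis using qapply_finite_support[where \<psi>=e, OF F True] by (simp add: e_def)
    qed (simp add: qapply_def mixed_outside[OF K])
  qed
  then show ?thesis using qapply_in_supp[OF K l2_finite_support[where \<psi>=e, OF F]] by simp
qed

text \<open>On finitely supported vectors \<open>R\<close> acts as a finite combination of its columns, and these
  vectors are dense.\<close>

lemma qapply_in_csubspace_of_columns:
  assumes T: "csubspace tp V T" and R: "mixed tp V R"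
    and columns: "\<And>m'. m' \<in> mems tp V \<Longrightarrow> (\<lambda>m. R m m') \<in> T" and \<phi>: "\<phi> \<in> l2 tp V"
  shows "qapply tp V R \<phi> \<in> T"
proof -
  obtain C where C: "\<forall>\<psi>\<in>l2 tp V. qapply tp V R \<psi> \<in> l2 tp V \<and> l2norm tp V (qapply tp V R \<psi>) \<le> C * l2norm tp V \<psi>"
    using mixed_bounded[OF R] by blast
  define C' where "C' = \<bar>C\<bar> + 1"
  have C': "C' > 0" "C \<le> C'" unfolding C'_def by auto
  show ?thesis
  proof (rule csubspace_closed[OF T])
    show "qapply tp V R \<phi> \<in> l2 tp V" using C \<phi> by blast
    fix \<epsilon> :: real assume "\<epsilon> > 0"
    then obtain F where F: "finite F" "F \<subseteq> mems tp V"
      and close: "l2norm tp V (\<lambda>m. \<phi> m - (if m \<in> F then \<phi> m else 0)) < \<epsilon> / C'"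
      using l2_truncation_approx[OF \<phi>, of "\<epsilon> / C'"] C' by auto
    define \<phi>F where "\<phi>F = (\<lambda>m. if m \<in> F then \<phi> m else 0)"
    have \<phi>F: "\<phi>F \<in> l2 tp V" using l2_finite_support[OF F] by (simp add: \<phi>F_def)
    have "qapply tp V R \<phi>F = (\<lambda>m. \<Sum>m'\<in>F. \<phi> m' * R m m')"
    proof
      fix m show "qapply tp V R \<phi>F m = (\<Sum>m'\<in>F. \<phi> m' * R m m')"
      proof (cases "m \<in> mems tp V")
        case True
        then show ?thesis
          using qapply_finite_support[where \<psi>=\<phi>F, OF F _ True] by (simp add: \<phi>F_def mult.commute)
      qed (simp add: qapply_def mixed_outside[OF R])
    qed
    also have "\<dots> \<in> T"
      using F columns by (intro csubspace_sum[OF T] csubspace_scale[OF T]) auto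
    finally have inT: "qapply tp V R \<phi>F \<in> T" .
    have "l2norm tp V (\<lambda>m. qapply tp V R \<phi> m - qapply tp V R \<phi>F m) \<le> C' * l2norm tp V (\<lambda>m. \<phi> m - \<phi>F m)"
      using C l2_diff[OF \<phi> \<phi>F] C' l2norm_nonneg qapply_diff[OF R \<phi> \<phi>F]
      by (metis (no_types, lifting) mult_right_mono order_trans)
    also have "\<dots> < \<epsilon>" using close C' by (simp add: \<phi>F_def field_simps)
    finally show "\<exists>\<xi>\<in>T. l2norm tp V (\<lambda>m. qapply tp V R \<phi> m - \<xi> m) < \<epsilon>" using inT by blast
  qed
qed

lemma supp_liftop:
  assumes disj: "V \<inter> G = {}" and WV: "W \<subseteq> V" and S: "S \<subseteq> l2 tp W" and c: "c \<in> mems tp G"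
    and K: "mixed tp V K" and supp: "supp tp V K \<subseteq> qin tp V W S"
  shows "supp tp (V \<union> G) (liftop tp V G c K) \<subseteq> qin tp (V \<union> G) W S"
proof (rule supp_subset_csubspace)
  show "csubspace tp (V \<union> G) (qin tp (V \<union> G) W S)" using WV S by (intro csubspace_qin) auto
  fix \<phi> assume "\<phi> \<in> l2 tp (V \<union> G)"
  then have "qapply tp V K (slicev tp V c \<phi>) \<in> qin tp V W S"
    using qapply_in_supp[OF K slicev_l2[OF c]] supp by blast
  then show "qapply tp (V \<union> G) (liftop tp V G c K) \<phi> \<in> qin tp (V \<union> G) W S"
    unfolding qapply_liftop[OF disj c] by (rule liftvec_qin[OF disj WV S c])
qed

section \<open>Partial traces\<close>

lemma ptrace_outside: "m \<notin> mems tp V \<or> m' \<notin> mems tp V \<Longrightarrow> ptrace tp V G K m m' = 0"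
  unfolding ptrace_def by auto

lemma quadratic_form_liftvec:
  assumes disj: "V \<inter> G = {}" and n: "n \<in> mems tp G"
  shows "l2inner tp (V \<union> G) (liftvec tp V G n \<psi>) (qapply tp (V \<union> G) K (liftvec tp V G n \<psi>))
    = infsum (\<lambda>a. infsum (\<lambda>a'. cnj (\<psi> a) * K (merge V a n) (merge V a' n) * \<psi> a') (mems tp V)) (mems tp V)"
proof -
  let ?L = "liftvec tp V G n \<psi>"
  have liftvec_outside: "restrict m G \<noteq> n \<Longrightarrow> ?L m = 0" for m by (simp add: liftvec_def)
  have "l2inner tp (V \<union> G) ?L (qapply tp (V \<union> G) K ?L)
      = infsum (\<lambda>a. cnj (?L (merge V a n)) * qapply tp (V \<union> G) K ?L (merge V a n)) (mems tp V)"
    unfolding l2inner_def by (rule infsum_merge_fixed[OF disj n, symmetric]) (simp add: liftvec_outside)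
  also have "\<dots> = infsum (\<lambda>a. infsum (\<lambda>a'. cnj (\<psi> a) * K (merge V a n) (merge V a' n) * \<psi> a') (mems tp V)) (mems tp V)"
  proof (rule infsum_cong)
    fix a assume a: "a \<in> mems tp V"
    have "qapply tp (V \<union> G) K ?L (merge V a n) = infsum (\<lambda>x. K (merge V a n) x * ?L x) (mems tp (V \<union> G))"
      unfolding qapply_def using merge_in_mems[OF a n] by simp
    also have "\<dots> = infsum (\<lambda>a'. K (merge V a n) (merge V a' n) * \<psi> a') (mems tp V)"
      by (subst infsum_merge_fixed[OF disj n, symmetric])
         (simp_all add: liftvec_outside liftvec_merge[OF disj n] cong: infsum_cong)
    finally show "cnj (?L (merge V a n)) * qapply tp (V \<union> G) K ?L (merge V a n)
        = infsum (\<lambda>a'. cnj (\<psi> a) * K (merge V a n) (merge V a' n) * \<psi> a') (mems tp V)"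
      by (simp add: liftvec_merge[OF disj n a] infsum_cmult_right' mult.assoc flip: infsum_cmult_right')
  qed
  finally show ?thesis .
qed

context
  fixes tp :: "'v \<Rightarrow> 'val set" and V G :: "'v set" and K :: "('v,'val) qop"
  assumes disj: "V \<inter> G = {}" and K: "mixed tp (V \<union> G) K"
begin

lemma summable_on_diag_slice:
  "m \<in> mems tp V \<Longrightarrow> (\<lambda>n. Re (K (merge V m n) (merge V m n))) summable_on mems tp G"
  using summable_on_merge_slice[OF disj mixed_diag_summable[OF K]] by simp

lemma summable_on_entry_slice:
  assumes m: "m \<in> mems tp V" and m': "m' \<in> mems tp V"
  shows "(\<lambda>n. cmod (K (merge V m n) (merge V m' n))) summable_on mems tp G"
    and "(\<lambda>n. K (merge V m n) (merge V m' n)) summable_on mems tp G"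
proof -
  have bound: "cmod (K (merge V m n) (merge V m' n))
      \<le> Re (K (merge V m n) (merge V m n)) + Re (K (merge V m' n) (merge V m' n))" for n
    using mixed_entry_le_average[OF K, of "merge V m n" "merge V m' n"]
      mixed_diag_nonneg[OF K, of "merge V m n"] mixed_diag_nonneg[OF K, of "merge V m' n"]
    by (simp add: field_simps)
  have "(\<lambda>n. Re (K (merge V m n) (merge V m n)) + Re (K (merge V m' n) (merge V m' n))) summable_on mems tp G"
    by (intro summable_on_add summable_on_diag_slice m m')
  then show norm: "(\<lambda>n. cmod (K (merge V m n) (merge V m' n))) summable_on mems tp G"
    by (rule Infinite_Sum.abs_summable_on_comparison_test') (rule bound)
  show "(\<lambda>n. K (merge V m n) (merge V m' n)) summable_on mems tp G"
    by (rule abs_summable_summable) (use norm in simp)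
qed

text \<open>Stated for arbitrary \<open>A\<close> so that it also bounds the tails of these sums.\<close>

lemma infsum_entry_slice_le_sqrt:
  assumes m: "m \<in> mems tp V" and m': "m' \<in> mems tp V" and A: "A \<subseteq> mems tp G"
  shows "cmod (infsum (\<lambda>n. K (merge V m n) (merge V m' n)) A)
    \<le> sqrt (infsum (\<lambda>n. Re (K (merge V m n) (merge V m n))) A)
      * sqrt (infsum (\<lambda>n. Re (K (merge V m' n) (merge V m' n))) A)"
proof -
  let ?f = "\<lambda>n. sqrt (Re (K (merge V m n) (merge V m n)))"
    and ?g = "\<lambda>n. sqrt (Re (K (merge V m' n) (merge V m' n)))"
  have f2: "(\<lambda>n. (?f n)\<^sup>2) summable_on A" and g2: "(\<lambda>n. (?g n)\<^sup>2) summable_on A"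
    using summable_on_subset[OF summable_on_diag_slice A] m m' by (simp_all add: mixed_diag_nonneg[OF K])
  have norm: "(\<lambda>n. cmod (K (merge V m n) (merge V m' n))) summable_on A"
    by (rule summable_on_subset[OF summable_on_entry_slice(1)[OF m m'] A])
  have "cmod (infsum (\<lambda>n. K (merge V m n) (merge V m' n)) A)
      \<le> infsum (\<lambda>n. cmod (K (merge V m n) (merge V m' n))) A"
    by (rule norm_infsum_bound) (use norm in simp)
  also have "\<dots> \<le> infsum (\<lambda>n. ?f n * ?g n) A"
    by (rule infsum_mono[OF norm cauchy_schwarz_summable_on_real[OF f2 g2]])
       (auto intro: mixed_entry_le_sqrt[OF K] simp: mixed_diag_nonneg[OF K])
  also have "\<dots> \<le> sqrt (infsum (\<lambda>n. (?f n)\<^sup>2) A) * sqrt (infsum (\<lambda>n. (?g n)\<^sup>2) A)"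
    by (rule cauchy_schwarz_infsum_real[OF f2 g2]) (auto simp: mixed_diag_nonneg[OF K])
  finally show ?thesis by (simp add: mixed_diag_nonneg[OF K])
qed

lemma ptrace_diag:
  "m \<in> mems tp V \<Longrightarrow> Re (ptrace tp V G K m m) = infsum (\<lambda>n. Re (K (merge V m n) (merge V m n))) (mems tp G)"
  unfolding ptrace_def using infsum_Re[OF summable_on_entry_slice(2)] by simp

lemma ptrace_diag_nonneg: "Re (ptrace tp V G K m m) \<ge> 0"
  by (cases "m \<in> mems tp V") (simp_all add: ptrace_diag infsum_nonneg mixed_diag_nonneg[OF K] ptrace_outside)

lemma summable_on_ptrace_diag: "(\<lambda>m. Re (ptrace tp V G K m m)) summable_on mems tp V"
  using summable_on_merge_iterated[OF disj mixed_diag_summable[OF K]]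
  by (simp add: ptrace_diag cong: summable_on_cong)

lemma ptrace_entry_le_sqrt:
  "cmod (ptrace tp V G K m m') \<le> sqrt (Re (ptrace tp V G K m m)) * sqrt (Re (ptrace tp V G K m' m'))"
proof (cases "m \<in> mems tp V \<and> m' \<in> mems tp V")
  case True
  then show ?thesis
    using infsum_entry_slice_le_sqrt[of m m' "mems tp G"] by (simp add: ptrace_diag, simp add: ptrace_def)
qed (simp add: ptrace_outside ptrace_diag_nonneg)

lemma summable_on_ptrace_quadratic_terms:
  assumes \<psi>: "\<psi> \<in> l2 tp V"
  shows "(\<lambda>(m,(m',n)). cnj (\<psi> m) * K (merge V m n) (merge V m' n) * \<psi> m')
    summable_on mems tp V \<times> (mems tp V \<times> mems tp G)"
proof -
  let ?D = "mems tp V \<times> (mems tp V \<times> mems tp G)"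
  define d where "d = (\<lambda>m n. Re (K (merge V m n) (merge V m n)))"
  define B where "B = (\<lambda>(m::('v,'val) mem,(m',n)). (cmod (\<psi> m))\<^sup>2 * d m' n)"
  have d0: "d m n \<ge> 0" for m n unfolding d_def by (rule mixed_diag_nonneg[OF K])
  have "(\<lambda>(m',n). d m' n) summable_on mems tp V \<times> mems tp G"
    using summable_on_merge_iff[OF disj, of "\<lambda>m. Re (K m m)"] mixed_diag_summable[OF K]
    unfolding d_def by (simp add: case_prod_beta')
  then have B: "B summable_on ?D"
    using summable_on_product_nonneg[OF l2_summable[OF \<psi>], of "\<lambda>(m',n). d m' n"] d0
    by (simp add: B_def case_prod_beta')
  have swap: "bij_betw (\<lambda>(m,(m',n)). (m',(m,n))) ?D ?D"
    by (rule bij_betwI[where g="\<lambda>(m,(m',n)). (m',(m,n))"]) auto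
  have B': "(\<lambda>x. B ((\<lambda>(m,(m',n)). (m',(m,n))) x)) summable_on ?D"
    using summable_on_reindex_bij_betw[OF swap] B by blast
  have bound: "cmod (cnj (\<psi> m) * K (merge V m n) (merge V m' n) * \<psi> m')
      \<le> B (m,(m',n)) + B (m',(m,n))" for m m' n
    unfolding B_def d_def by (simp add: mixed_entry_weighted_le[OF K])
  define \<Phi> where "\<Phi> = (\<lambda>(m,(m',n)). cnj (\<psi> m) * K (merge V m n) (merge V m' n) * \<psi> m')"
  have "(\<lambda>x. B x + B ((\<lambda>(m,(m',n)). (m',(m,n))) x)) summable_on ?D"
    by (intro summable_on_add B B')
  then have "(\<lambda>x. norm (\<Phi> x)) summable_on ?D"
    by (rule Infinite_Sum.abs_summable_on_comparison_test') (auto simp: \<Phi>_def bound)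
  then show ?thesis
    unfolding \<Phi>_def[symmetric] by (rule abs_summable_summable)
qed

lemma quadratic_form_ptrace:
  assumes \<psi>: "\<psi> \<in> l2 tp V"
  shows "l2inner tp V \<psi> (qapply tp V (ptrace tp V G K) \<psi>)
    = infsum (\<lambda>n. l2inner tp (V \<union> G) (liftvec tp V G n \<psi>) (qapply tp (V \<union> G) K (liftvec tp V G n \<psi>))) (mems tp G)"
proof -
  let ?\<Phi> = "\<lambda>(m,(m',n)). cnj (\<psi> m) * K (merge V m n) (merge V m' n) * \<psi> m'"
  have "l2inner tp V \<psi> (qapply tp V (ptrace tp V G K) \<psi>)
      = infsum (\<lambda>m. infsum (\<lambda>m'. infsum (\<lambda>n. ?\<Phi> (m,(m',n))) (mems tp G)) (mems tp V)) (mems tp V)"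
    unfolding l2inner_def qapply_def
    by (intro infsum_cong)
       (simp add: ptrace_def mult.assoc flip: infsum_cmult_right' infsum_cmult_left' cong: infsum_cong)
  also have "\<dots> = infsum (\<lambda>n. infsum (\<lambda>m. infsum (\<lambda>m'. ?\<Phi> (m,(m',n))) (mems tp V)) (mems tp V)) (mems tp G)"
    by (rule infsum_triple_rotate[OF summable_on_ptrace_quadratic_terms[OF \<psi>]])
  also have "\<dots> = infsum (\<lambda>n. l2inner tp (V \<union> G) (liftvec tp V G n \<psi>) (qapply tp (V \<union> G) K (liftvec tp V G n \<psi>))) (mems tp G)"
    by (rule infsum_cong) (simp add: quadratic_form_liftvec[OF disj])
  finally show ?thesis .
qed

lemma ptrace_positive:
  assumes \<psi>: "\<psi> \<in> l2 tp V"
  shows "Im (l2inner tp V \<psi> (qapply tp V (ptrace tp V G K) \<psi>)) = 0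
    \<and> Re (l2inner tp V \<psi> (qapply tp V (ptrace tp V G K) \<psi>)) \<ge> 0"
proof -
  let ?P = "\<lambda>n. l2inner tp (V \<union> G) (liftvec tp V G n \<psi>) (qapply tp (V \<union> G) K (liftvec tp V G n \<psi>))"
  have P: "Im (?P n) = 0 \<and> Re (?P n) \<ge> 0" if "n \<in> mems tp G" for n
    using mixed_positive[OF K liftvec_l2[OF disj that \<psi>]] .
  show ?thesis
  proof (cases "?P summable_on mems tp G")
    case True
    then show ?thesis
      unfolding quadratic_form_ptrace[OF \<psi>] infsum_Re[OF True, symmetric] infsum_Im[OF True, symmetric]
      using P by (simp add: infsum_nonneg cong: infsum_cong)
  qed (simp add: quadratic_form_ptrace[OF \<psi>] infsum_not_exists)
qed

lemma mixed_ptrace: "mixed tp V (ptrace tp V G K)"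
  by (rule mixedI)
     (simp_all add: ptrace_outside ptrace_diag_nonneg summable_on_ptrace_diag ptrace_entry_le_sqrt ptrace_positive)

text \<open>Column \<open>m'\<close> of \<open>tr\<^sub>G K\<close> is \<open>\<Sum>\<^sub>n \<langle>e\<^sub>n| K e\<^bsub>(m',n)\<^esub>\<close>; truncating the sum to \<open>n \<in> F\<close>
  costs at most the tail of the diagonal at \<open>m'\<close>.\<close>

lemma ptrace_column_approx:
  assumes m': "m' \<in> mems tp V" and F: "finite F" "F \<subseteq> mems tp G"
  shows "(l2norm tp V (\<lambda>m. ptrace tp V G K m m' - (\<Sum>n\<in>F. slicev tp V n (\<lambda>x. K x (merge V m' n)) m)))\<^sup>2
    \<le> infsum (\<lambda>m. Re (ptrace tp V G K m m)) (mems tp V)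
      * infsum (\<lambda>n. Re (K (merge V m' n) (merge V m' n))) (mems tp G - F)"
proof -
  let ?d = "\<lambda>m n. Re (K (merge V m n) (merge V m n))" and ?A = "mems tp G - F"
  let ?tail = "infsum (?d m') ?A"
  have d0: "?d m n \<ge> 0" for m n by (rule mixed_diag_nonneg[OF K])
  have tail0: "?tail \<ge> 0" by (simp add: d0 infsum_nonneg)
  have pointwise: "(cmod (ptrace tp V G K m m' - (\<Sum>n\<in>F. slicev tp V n (\<lambda>x. K x (merge V m' n)) m)))\<^sup>2
      \<le> Re (ptrace tp V G K m m) * ?tail" for m
  proof (cases "m \<in> mems tp V")
    case m: True
    have "((\<lambda>n. K (merge V m n) (merge V m' n)) has_sum ptrace tp V G K m m') (mems tp G)"
      unfolding ptrace_def using m m' summable_on_entry_slice(2)[OF m m'] by simp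
    then have "infsum (\<lambda>n. K (merge V m n) (merge V m' n)) ?A
        = ptrace tp V G K m m' - (\<Sum>n\<in>F. K (merge V m n) (merge V m' n))"
      by (rule infsumI[OF has_sum_Diff_finite[OF _ F]])
    then have "ptrace tp V G K m m' - (\<Sum>n\<in>F. slicev tp V n (\<lambda>x. K x (merge V m' n)) m)
        = infsum (\<lambda>n. K (merge V m n) (merge V m' n)) ?A"
      using m by (simp add: slicev_def)
    then have "cmod (ptrace tp V G K m m' - (\<Sum>n\<in>F. slicev tp V n (\<lambda>x. K x (merge V m' n)) m))
        \<le> sqrt (infsum (?d m) ?A) * sqrt ?tail"
      using infsum_entry_slice_le_sqrt[OF m m', of ?A] by simp
    also have "\<dots> \<le> sqrt (Re (ptrace tp V G K m m)) * sqrt ?tail"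
      unfolding ptrace_diag[OF m]
      by (intro mult_right_mono real_sqrt_le_mono infsum_mono_neutral summable_on_diag_slice[OF m]
          summable_on_subset[OF summable_on_diag_slice[OF m]]) (auto simp: d0 tail0)
    finally have "(cmod (ptrace tp V G K m m' - (\<Sum>n\<in>F. slicev tp V n (\<lambda>x. K x (merge V m' n)) m)))\<^sup>2
        \<le> (sqrt (Re (ptrace tp V G K m m)) * sqrt ?tail)\<^sup>2"
      by (rule power_mono) simp
    then show ?thesis using tail0 by (simp add: power_mult_distrib ptrace_diag_nonneg)
  qed (simp add: slicev_def ptrace_outside)
  note diag = summable_on_cmult_left[OF summable_on_ptrace_diag, of ?tail]
  have "(\<lambda>m. (cmod (ptrace tp V G K m m' - (\<Sum>n\<in>F. slicev tp V n (\<lambda>x. K x (merge V m' n)) m)))\<^sup>2) summable_on mems tp V"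
    by (rule summable_on_comparison_test[OF diag]) (use pointwise in auto)
  then show ?thesis
    unfolding l2norm_power2 using infsum_mono[OF _ diag pointwise]
    by (simp add: infsum_cmult_left')
qed

context
  fixes W :: "'v set" and S :: "('v,'val) qvec set"
  assumes WV: "W \<subseteq> V" and S: "S \<subseteq> l2 tp W"
    and supp: "supp tp (V \<union> G) K \<subseteq> qin tp (V \<union> G) W S"
begin

lemma ptrace_column_in_qin:
  assumes m': "m' \<in> mems tp V"
  shows "(\<lambda>m. ptrace tp V G K m m') \<in> qin tp V W S"
proof (rule csubspace_closed[OF csubspace_qin[OF WV S]])
  show "(\<lambda>m. ptrace tp V G K m m') \<in> l2 tp V"
    by (rule column_l2_of_entry_bound[where D="\<lambda>m. Re (ptrace tp V G K m m)"])
       (simp_all add: ptrace_outside ptrace_diag_nonneg summable_on_ptrace_diag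
         ptrace_entry_le_sqrt)
  fix \<epsilon> :: real assume \<epsilon>: "\<epsilon> > 0"
  define T where "T = infsum (\<lambda>m. Re (ptrace tp V G K m m)) (mems tp V)"
  have T0: "T \<ge> 0" unfolding T_def by (simp add: infsum_nonneg ptrace_diag_nonneg)
  obtain F where F: "finite F" "F \<subseteq> mems tp G"
    and tail: "infsum (\<lambda>n. Re (K (merge V m' n) (merge V m' n))) (mems tp G - F) < \<epsilon>\<^sup>2 / (T + 1)"
    using small_infsum_tail[OF summable_on_diag_slice[OF m'], of "\<epsilon>\<^sup>2 / (T + 1)"] \<epsilon> T0 by auto
  have "(\<lambda>m. \<Sum>n\<in>F. slicev tp V n (\<lambda>x. K x (merge V m' n)) m) \<in> qin tp V W S"
    using F m' supp column_in_supp[OF K merge_in_mems]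
    by (intro csubspace_sum[OF csubspace_qin[OF WV S]] slicev_qin[OF disj WV S]) auto
  moreover have "(l2norm tp V (\<lambda>m. ptrace tp V G K m m' - (\<Sum>n\<in>F. slicev tp V n (\<lambda>x. K x (merge V m' n)) m)))\<^sup>2
      < \<epsilon>\<^sup>2"
  proof -
    have "T * (\<epsilon>\<^sup>2 / (T + 1)) < \<epsilon>\<^sup>2" using T0 \<epsilon> by (simp add: field_simps)
    then show ?thesis
      using ptrace_column_approx[OF m' F] mult_left_mono[OF less_imp_le[OF tail] T0]
      unfolding T_def by linarith
  qed
  then have "l2norm tp V (\<lambda>m. ptrace tp V G K m m' - (\<Sum>n\<in>F. slicev tp V n (\<lambda>x. K x (merge V m' n)) m)) < \<epsilon>"
    by (rule power_less_imp_less_base) (use \<epsilon> in simp)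
  ultimately show "\<exists>\<phi>\<in>qin tp V W S. l2norm tp V (\<lambda>m. ptrace tp V G K m m' - \<phi> m) < \<epsilon>" by fast
qed

lemma supp_ptrace: "supp tp V (ptrace tp V G K) \<subseteq> qin tp V W S"
  by (intro supp_subset_csubspace[OF csubspace_qin[OF WV S]] qapply_in_csubspace_of_columns[OF
      csubspace_qin[OF WV S] mixed_ptrace ptrace_column_in_qin])

end

end

lemma ptrace_ptrace:
  assumes XR: "X \<inter> R = {}" and G: "(X \<union> R) \<inter> G = {}" and K: "mixed tp (X \<union> R \<union> G) K"
  shows "ptrace tp X R (ptrace tp (X \<union> R) G K) = ptrace tp X (R \<union> G) K"
proof (intro ext)
  fix m m'
  show "ptrace tp X R (ptrace tp (X \<union> R) G K) m m' = ptrace tp X (R \<union> G) K m m'"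
  proof (cases "m \<in> mems tp X \<and> m' \<in> mems tp X")
    case True
    then have m: "m \<in> mems tp X" and m': "m' \<in> mems tp X" by auto
    have X: "X \<inter> (R \<union> G) = {}" and RG: "R \<inter> G = {}" using XR G by blast+
    have K': "mixed tp (X \<union> (R \<union> G)) K" using K by (simp add: Un_assoc)
    have "ptrace tp X R (ptrace tp (X \<union> R) G K) m m'
        = infsum (\<lambda>r. infsum (\<lambda>g. K (merge X m (merge R r g)) (merge X m' (merge R r g))) (mems tp G)) (mems tp R)"
      unfolding ptrace_def using True merge_in_mems[of m tp X _ R] merge_in_mems[of m' tp X _ R]
      by (simp add: merge_assoc cong: infsum_cong)
    also have "\<dots> = ptrace tp X (R \<union> G) K m m'"
      unfolding ptrace_def using True infsum_merge_iterated[OF RG summable_on_entry_slice(2)[OF X K' m m']] by simp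
    finally show ?thesis .
  qed (auto simp: ptrace_def)
qed

lemma ptrace_liftop:
  assumes XR: "X \<inter> R = {}" and G: "(X \<union> R) \<inter> G = {}" and c: "c \<in> mems tp G"
  shows "ptrace tp X (R \<union> G) (liftop tp (X \<union> R) G c K) = ptrace tp X R K"
proof (intro ext)
  fix m m'
  show "ptrace tp X (R \<union> G) (liftop tp (X \<union> R) G c K) m m' = ptrace tp X R K m m'"
  proof (cases "m \<in> mems tp X \<and> m' \<in> mems tp X")
    case True
    have RG: "R \<inter> G = {}" and XG: "X \<inter> G = {}" using G by blast+
    let ?f = "\<lambda>n. liftop tp (X \<union> R) G c K (merge X m n) (merge X m' n)"
    have "infsum ?f (mems tp (R \<union> G)) = infsum (\<lambda>r. ?f (merge R r c)) (mems tp R)"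
      by (rule infsum_merge_fixed[OF RG c, symmetric]) (simp add: liftop_def restrict_merge_disjoint[OF XG])
    also have "\<dots> = infsum (\<lambda>r. K (merge X m r) (merge X m' r)) (mems tp R)"
      using True by (intro infsum_cong) (simp add: merge_assoc liftop_merge[OF G c] merge_in_mems)
    finally show ?thesis unfolding ptrace_def using True by simp
  qed (auto simp: ptrace_def)
qed

section \<open>Separability\<close>

lemma qtensor_swap: "qtensor tp A B K K' = qtensor tp B A K' K"
  unfolding qtensor_def by (intro ext) (simp add: Un_commute mult.commute)

lemma separable_swap: "separable tp A B K \<Longrightarrow> separable tp B A K"
  unfolding separable_def qtensor_swap[of tp A B] by blast

lemma separable_liftop:
  assumes sep: "separable tp A B K" and G: "(A \<union> B) \<inter> G = {}" and c: "c \<in> mems tp G"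
  shows "separable tp (A \<union> G) B (liftop tp (A \<union> B) G c K)"
proof -
  obtain \<rho>s \<rho>s' where mixed: "\<forall>i. mixed tp A (\<rho>s i) \<and> mixed tp B (\<rho>s' i)"
    and sums: "\<forall>m m'. (\<lambda>i. qtensor tp A B (\<rho>s i) (\<rho>s' i) m m') sums K m m'"
    using sep unfolding separable_def by blast
  have AG: "A \<inter> G = {}" using G by blast
  have lift: "qtensor tp (A \<union> G) B (liftop tp A G c (\<rho>s i)) (\<rho>s' i) = liftop tp (A \<union> B) G c (qtensor tp A B (\<rho>s i) (\<rho>s' i))"
    for i
  proof (intro ext)
    fix x y
    have AGB: "A \<union> G \<union> B = A \<union> B \<union> G" and "(A \<union> G) \<inter> G = G" "(A \<union> G) \<inter> A = A" "(A \<union> B) \<inter> A = A" "(A \<union> B) \<inter> B = B"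
      by auto
    then show "qtensor tp (A \<union> G) B (liftop tp A G c (\<rho>s i)) (\<rho>s' i) x y
        = liftop tp (A \<union> B) G c (qtensor tp A B (\<rho>s i) (\<rho>s' i)) x y"
      unfolding qtensor_def liftop_def
      using restrict_in_mems[of x tp "A \<union> B \<union> G"] restrict_in_mems[of y tp "A \<union> B \<union> G"]
      by auto
  qed
  have "(\<lambda>i. liftop tp (A \<union> B) G c (qtensor tp A B (\<rho>s i) (\<rho>s' i)) x y) sums liftop tp (A \<union> B) G c K x y"
    for x y
    using sums by (cases "x \<in> mems tp (A \<union> B \<union> G) \<and> y \<in> mems tp (A \<union> B \<union> G) \<and> restrict x G = c \<and> restrict y G = c")
      (auto simp: liftop_def)
  then show ?thesis
    unfolding separable_def using mixed mixed_liftop[OF AG c]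
    by (intro exI[of _ "\<lambda>i. liftop tp A G c (\<rho>s i)"] exI[of _ \<rho>s']) (simp add: lift)
qed

lemma
  assumes \<rho>: "mixed tp V \<rho>" and \<rho>': "mixed tp W \<rho>'"
  shows qtensor_diag: "Re (qtensor tp V W \<rho> \<rho>' a a) = (if a \<in> mems tp (V \<union> W)
      then Re (\<rho> (restrict a V) (restrict a V)) * Re (\<rho>' (restrict a W) (restrict a W)) else 0)"
    and qtensor_diag_nonneg: "Re (qtensor tp V W \<rho> \<rho>' a a) \<ge> 0"
proof -
  show diag: "Re (qtensor tp V W \<rho> \<rho>' a a) = (if a \<in> mems tp (V \<union> W)
      then Re (\<rho> (restrict a V) (restrict a V)) * Re (\<rho>' (restrict a W) (restrict a W)) else 0)"
    unfolding qtensor_def by (subst (1 2) mixed_diag_real[OF \<rho>], subst (1 2) mixed_diag_real[OF \<rho>']) simp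
  show "Re (qtensor tp V W \<rho> \<rho>' a a) \<ge> 0"
    unfolding diag by (simp add: mixed_diag_nonneg[OF \<rho>] mixed_diag_nonneg[OF \<rho>'])
qed

lemma qtensor_entry_le_average:
  assumes \<rho>: "mixed tp V \<rho>" and \<rho>': "mixed tp W \<rho>'"
  shows "cmod (qtensor tp V W \<rho> \<rho>' a b) \<le> (Re (qtensor tp V W \<rho> \<rho>' a a) + Re (qtensor tp V W \<rho> \<rho>' b b)) / 2"
proof (cases "a \<in> mems tp (V \<union> W) \<and> b \<in> mems tp (V \<union> W)")
  case True
  let ?p = "Re (\<rho> (restrict a V) (restrict a V))" and ?q = "Re (\<rho> (restrict b V) (restrict b V))"
  let ?p' = "Re (\<rho>' (restrict a W) (restrict a W))" and ?q' = "Re (\<rho>' (restrict b W) (restrict b W))"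
  have nonneg: "?p \<ge> 0" "?q \<ge> 0" "?p' \<ge> 0" "?q' \<ge> 0"
    using mixed_diag_nonneg[OF \<rho>] mixed_diag_nonneg[OF \<rho>'] by auto
  have "cmod (qtensor tp V W \<rho> \<rho>' a b)
      = cmod (\<rho> (restrict a V) (restrict b V)) * cmod (\<rho>' (restrict a W) (restrict b W))"
    unfolding qtensor_def using True by (simp add: norm_mult)
  also have "\<dots> \<le> (sqrt ?p * sqrt ?q) * (sqrt ?p' * sqrt ?q')"
    by (intro mult_mono mixed_entry_le_sqrt[OF \<rho>] mixed_entry_le_sqrt[OF \<rho>']) (use nonneg in auto)
  also have "\<dots> = sqrt (?p * ?p') * sqrt (?q * ?q')" by (simp add: real_sqrt_mult)
  also have "\<dots> \<le> (?p * ?p' + ?q * ?q') / 2"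
    using arith_geo_mean_sqrt[of "?p * ?p'" "?q * ?q'"] nonneg by (simp add: real_sqrt_mult)
  finally show ?thesis using True by (simp add: qtensor_diag[OF \<rho> \<rho>'])
next
  case False
  then have "qtensor tp V W \<rho> \<rho>' a b = 0" by (auto simp: qtensor_def)
  then show ?thesis using qtensor_diag_nonneg[OF \<rho> \<rho>', of a] qtensor_diag_nonneg[OF \<rho> \<rho>', of b] by simp
qed

lemma ptrace_qtensor:
  assumes AB: "A \<inter> B = {}" and AG: "A \<inter> G = {}" and BG: "B \<inter> G = {}"
  shows "qtensor tp A B (ptrace tp A G \<rho>) \<rho>' = ptrace tp (A \<union> B) G (qtensor tp (A \<union> G) B \<rho> \<rho>')"
proof (intro ext)
  fix x y
  show "qtensor tp A B (ptrace tp A G \<rho>) \<rho>' x y = ptrace tp (A \<union> B) G (qtensor tp (A \<union> G) B \<rho> \<rho>') x y"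
  proof (cases "x \<in> mems tp (A \<union> B) \<and> y \<in> mems tp (A \<union> B)")
    case True
    have restrict_A_G: "restrict (merge (A \<union> B) z g) (A \<union> G) = merge A (restrict z A) g"
      if "z \<in> mems tp (A \<union> B)" "g \<in> mems tp G" for z g
      using that AG BG unfolding restrict_def merge_def mems_iff by (auto intro!: ext)
    have restrict_B: "restrict (merge (A \<union> B) z g) B = restrict z B" for z g
      unfolding restrict_def merge_def by (rule ext) auto
    have in_mems: "merge (A \<union> B) z g \<in> mems tp (A \<union> G \<union> B)" if "z \<in> mems tp (A \<union> B)" "g \<in> mems tp G" for z g
      using merge_in_mems[OF that] by (simp add: Un_ac)
    have "qtensor tp A B (ptrace tp A G \<rho>) \<rho>' x y
        = infsum (\<lambda>g. \<rho> (merge A (restrict x A) g) (merge A (restrict y A) g)) (mems tp G)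
          * \<rho>' (restrict x B) (restrict y B)"
      unfolding qtensor_def ptrace_def using True restrict_in_mems[of _ tp "A \<union> B" A] by simp
    also have "\<dots> = infsum (\<lambda>g. qtensor tp (A \<union> G) B \<rho> \<rho>' (merge (A \<union> B) x g) (merge (A \<union> B) y g)) (mems tp G)"
      unfolding qtensor_def infsum_cmult_left'[symmetric] using True
      by (intro infsum_cong) (simp add: in_mems restrict_A_G restrict_B)
    also have "\<dots> = ptrace tp (A \<union> B) G (qtensor tp (A \<union> G) B \<rho> \<rho>') x y"
      unfolding ptrace_def using True by simp
    finally show ?thesis .
  qed (auto simp: qtensor_def ptrace_def)
qed

text \<open>Dominated convergence: the entries of the summands are bounded by their diagonals, whose
  sums are controlled by the diagonal of the limit.\<close>

lemma sums_ptrace: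
  assumes disj: "V \<inter> G = {}" and K: "mixed tp (V \<union> G) K"
    and sums: "\<And>m m'. (\<lambda>i. T i m m') sums K m m'"
    and T_diag: "\<And>i m. Re (T i m m) \<ge> 0"
    and T_entry: "\<And>i a b. cmod (T i a b) \<le> (Re (T i a a) + Re (T i b b)) / 2"
  shows "(\<lambda>i. ptrace tp V G (T i) x y) sums ptrace tp V G K x y"
proof (cases "x \<in> mems tp V \<and> y \<in> mems tp V")
  case True
  let ?mx = "merge V x" and ?my = "merge V y"
  let ?B = "\<lambda>g i. (Re (T i (?mx g) (?mx g)) + Re (T i (?my g) (?my g))) / 2"
  let ?b = "\<lambda>g. (Re (K (?mx g) (?mx g)) + Re (K (?my g) (?my g))) / 2"
  have "(\<lambda>i. ?B g i) sums ?b g" for g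
    using sums_divide[OF sums_add[OF sums_Re[OF sums] sums_Re[OF sums]]] by simp
  then have B_has_sum: "((\<lambda>i. ?B g i) has_sum ?b g) UNIV" for g
    by (rule sums_nonneg_imp_has_sum) (simp add: T_diag)
  have "(\<lambda>(g,i). ?B g i) summable_on mems tp G \<times> UNIV"
  proof -
    have "?b summable_on mems tp G"
      using True summable_on_cmult_left[OF summable_on_add[OF summable_on_diag_slice[OF disj K, of x]
          summable_on_diag_slice[OF disj K, of y]], of "1/2"] by simp
    then have "(\<lambda>p. ?B (fst p) (snd p)) summable_on Sigma (mems tp G) (\<lambda>_. UNIV)"
      using B_has_sum T_diag by (intro summable_on_SigmaI[where g="?b"]) auto
    then show ?thesis by (simp add: case_prod_beta')
  qed
  then have "(\<lambda>i. infsum (\<lambda>g. T i (?mx g) (?my g)) (mems tp G)) sums infsum (\<lambda>g. K (?mx g) (?my g)) (mems tp G)"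
    by (rule sums_infsum_interchange[OF sums]) (rule T_entry)
  then show ?thesis unfolding ptrace_def using True by simp
next
  case False
  then have "ptrace tp V G (T i) x y = 0" "ptrace tp V G K x y = 0" for i by (auto simp: ptrace_def)
  then show ?thesis by simp
qed

lemma separable_ptrace:
  assumes sep: "separable tp (A \<union> G) B K" and AB: "A \<inter> B = {}" and AG: "A \<inter> G = {}" and BG: "B \<inter> G = {}"
    and K: "mixed tp (A \<union> B \<union> G) K"
  shows "separable tp A B (ptrace tp (A \<union> B) G K)"
proof -
  obtain \<rho>s \<rho>s' where mixed: "\<And>i. mixed tp (A \<union> G) (\<rho>s i)" "\<And>i. mixed tp B (\<rho>s' i)"
    and sums: "\<And>m m'. (\<lambda>i. qtensor tp (A \<union> G) B (\<rho>s i) (\<rho>s' i) m m') sums K m m'"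
    using sep unfolding separable_def by blast
  have "(A \<union> B) \<inter> G = {}" using AG BG by blast
  from sums_ptrace[OF this K sums qtensor_diag_nonneg[OF mixed] qtensor_entry_le_average[OF mixed]]
  have sums': "\<forall>x y. (\<lambda>i. qtensor tp A B (ptrace tp A G (\<rho>s i)) (\<rho>s' i) x y) sums ptrace tp (A \<union> B) G K x y"
    by (simp add: ptrace_qtensor[OF AB AG BG])
  have mixed': "\<forall>i. mixed tp A (ptrace tp A G (\<rho>s i)) \<and> mixed tp B (\<rho>s' i)"
    using mixed_ptrace[OF AG] mixed by blast
  show ?thesis unfolding separable_def
    by (rule exI[of _ "\<lambda>i. ptrace tp A G (\<rho>s i)"], rule exI[of _ \<rho>s']) (use sums' mixed' in blast)
qed

section \<open>Ghost variables outside the predicate\<close>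

context
  fixes tp :: "'v \<Rightarrow> 'val set" and X E U G W :: "'v set" and S :: "('v,'val) qvec set"
  assumes disj: "X \<inter> E = {}" "X \<inter> U = {}" "E \<inter> U = {}" and G: "(X \<union> E \<union> U) \<inter> G = {}"
    and WV: "W \<subseteq> X \<union> E \<union> U" and S: "S \<subseteq> l2 tp W"
begin

lemma ptrace_liftop_ghosts:
  "c \<in> mems tp G \<Longrightarrow> ptrace tp X (E \<union> U \<union> G) (liftop tp (X \<union> E \<union> U) G c K) = ptrace tp X (E \<union> U) K"
  using ptrace_liftop[of X "E \<union> U" G c tp K] disj G by (simp add: Int_Un_distrib Un_assoc)

lemma ptrace_ptrace_ghosts:
  "mixed tp (X \<union> E \<union> U \<union> G) K \<Longrightarrow> ptrace tp X (E \<union> U) (ptrace tp (X \<union> E \<union> U) G K) = ptrace tp X (E \<union> U \<union> G) K"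
  using ptrace_ptrace[of X "E \<union> U" G tp K] disj G by (simp add: Int_Un_distrib Un_assoc)

lemma satisfies_add_entangled:
  assumes ne: "\<forall>v. tp v \<noteq> {}" and sat: "satisfies tp X E U (qin tp (X \<union> E \<union> U) W S) \<rho>"
  shows "satisfies tp X (E \<union> G) U (qin tp (X \<union> (E \<union> G) \<union> U) W S) \<rho>"
proof -
  obtain \<rho>o where K: "mixed tp (X \<union> E \<union> U) \<rho>o" and sep: "separable tp (X \<union> E) U \<rho>o"
    and supp: "supp tp (X \<union> E \<union> U) \<rho>o \<subseteq> qin tp (X \<union> E \<union> U) W S" and tr: "ptrace tp X (E \<union> U) \<rho>o = \<rho>"
    using sat unfolding satisfies_def by blast
  obtain c where c: "c \<in> mems tp G" using ex_in_mems[OF ne] by blast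
  let ?\<rho>o = "liftop tp (X \<union> E \<union> U) G c \<rho>o"
  have "mixed tp (X \<union> E \<union> U \<union> G) ?\<rho>o" by (rule mixed_liftop[OF G c K])
  moreover have "separable tp (X \<union> E \<union> G) U ?\<rho>o" by (rule separable_liftop[OF sep G c])
  moreover have "supp tp (X \<union> E \<union> U \<union> G) ?\<rho>o \<subseteq> qin tp (X \<union> E \<union> U \<union> G) W S"
    by (rule supp_liftop[OF G WV S c K supp])
  moreover have "ptrace tp X (E \<union> U \<union> G) ?\<rho>o = \<rho>"
    using ptrace_liftop_ghosts[OF c] tr by simp
  moreover have "X \<union> (E \<union> G) \<union> U = X \<union> E \<union> U \<union> G" "X \<union> (E \<union> G) = X \<union> E \<union> G" "E \<union> G \<union> U = E \<union> U \<union> G"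
    by blast+
  ultimately show ?thesis unfolding satisfies_def by auto
qed

lemma satisfies_add_unentangled:
  assumes ne: "\<forall>v. tp v \<noteq> {}" and sat: "satisfies tp X E U (qin tp (X \<union> E \<union> U) W S) \<rho>"
  shows "satisfies tp X E (U \<union> G) (qin tp (X \<union> E \<union> (U \<union> G)) W S) \<rho>"
proof -
  obtain \<rho>o where K: "mixed tp (X \<union> E \<union> U) \<rho>o" and sep: "separable tp (X \<union> E) U \<rho>o"
    and supp: "supp tp (X \<union> E \<union> U) \<rho>o \<subseteq> qin tp (X \<union> E \<union> U) W S" and tr: "ptrace tp X (E \<union> U) \<rho>o = \<rho>"
    using sat unfolding satisfies_def by blast
  obtain c where c: "c \<in> mems tp G" using ex_in_mems[OF ne] by blast
  let ?\<rho>o = "liftop tp (X \<union> E \<union> U) G c \<rho>o"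
  have "mixed tp (X \<union> E \<union> U \<union> G) ?\<rho>o" by (rule mixed_liftop[OF G c K])
  moreover have "separable tp (X \<union> E) (U \<union> G) ?\<rho>o"
  proof -
    have "(U \<union> (X \<union> E)) \<inter> G = {}" and XEU: "U \<union> (X \<union> E) = X \<union> E \<union> U" using G by blast+
    from separable_liftop[OF separable_swap[OF sep] this(1) c] show ?thesis
      unfolding XEU by (rule separable_swap)
  qed
  moreover have "supp tp (X \<union> E \<union> U \<union> G) ?\<rho>o \<subseteq> qin tp (X \<union> E \<union> U \<union> G) W S"
    by (rule supp_liftop[OF G WV S c K supp])
  moreover have "ptrace tp X (E \<union> U \<union> G) ?\<rho>o = \<rho>"
    using ptrace_liftop_ghosts[OF c] tr by simp
  moreover have "X \<union> E \<union> (U \<union> G) = X \<union> E \<union> U \<union> G" "E \<union> (U \<union> G) = E \<union> U \<union> G" by blast+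
  ultimately show ?thesis unfolding satisfies_def by auto
qed

lemma satisfies_remove_entangled:
  assumes sat: "satisfies tp X (E \<union> G) U (qin tp (X \<union> (E \<union> G) \<union> U) W S) \<rho>"
  shows "satisfies tp X E U (qin tp (X \<union> E \<union> U) W S) \<rho>"
proof -
  obtain \<rho>o where K: "mixed tp (X \<union> E \<union> U \<union> G) \<rho>o" and sep: "separable tp (X \<union> E \<union> G) U \<rho>o"
    and supp: "supp tp (X \<union> E \<union> U \<union> G) \<rho>o \<subseteq> qin tp (X \<union> E \<union> U \<union> G) W S"
    and tr: "ptrace tp X (E \<union> U \<union> G) \<rho>o = \<rho>"
  proof -
    have "X \<union> (E \<union> G) \<union> U = X \<union> E \<union> U \<union> G" "X \<union> (E \<union> G) = X \<union> E \<union> G" "E \<union> G \<union> U = E \<union> U \<union> G"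
      by blast+
    with sat show thesis unfolding satisfies_def using that by auto
  qed
  let ?\<rho> = "ptrace tp (X \<union> E \<union> U) G \<rho>o"
  have "mixed tp (X \<union> E \<union> U) ?\<rho>" by (rule mixed_ptrace[OF G K])
  moreover have "separable tp (X \<union> E) U ?\<rho>"
  proof (rule separable_ptrace[OF sep _ _ _ K])
    show "(X \<union> E) \<inter> U = {}" "(X \<union> E) \<inter> G = {}" "U \<inter> G = {}" using disj G by blast+
  qed
  moreover have "supp tp (X \<union> E \<union> U) ?\<rho> \<subseteq> qin tp (X \<union> E \<union> U) W S"
    by (rule supp_ptrace[OF G K WV S supp])
  moreover have "ptrace tp X (E \<union> U) ?\<rho> = \<rho>"
    using ptrace_ptrace_ghosts[OF K] tr by simp
  ultimately show ?thesis unfolding satisfies_def by blast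
qed

lemma satisfies_remove_unentangled:
  assumes sat: "satisfies tp X E (U \<union> G) (qin tp (X \<union> E \<union> (U \<union> G)) W S) \<rho>"
  shows "satisfies tp X E U (qin tp (X \<union> E \<union> U) W S) \<rho>"
proof -
  obtain \<rho>o where K: "mixed tp (X \<union> E \<union> U \<union> G) \<rho>o" and sep: "separable tp (X \<union> E) (U \<union> G) \<rho>o"
    and supp: "supp tp (X \<union> E \<union> U \<union> G) \<rho>o \<subseteq> qin tp (X \<union> E \<union> U \<union> G) W S"
    and tr: "ptrace tp X (E \<union> U \<union> G) \<rho>o = \<rho>"
  proof -
    have "X \<union> E \<union> (U \<union> G) = X \<union> E \<union> U \<union> G" "E \<union> (U \<union> G) = E \<union> U \<union> G" by blast+
    with sat show thesis unfolding satisfies_def using that by auto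
  qed
  let ?\<rho> = "ptrace tp (X \<union> E \<union> U) G \<rho>o"
  have "mixed tp (X \<union> E \<union> U) ?\<rho>" by (rule mixed_ptrace[OF G K])
  moreover have "separable tp (X \<union> E) U ?\<rho>"
  proof -
    have XEU: "U \<union> (X \<union> E) = X \<union> E \<union> U" by blast
    have "separable tp U (X \<union> E) (ptrace tp (U \<union> (X \<union> E)) G \<rho>o)"
    proof (rule separable_ptrace[OF separable_swap[OF sep]])
      show "U \<inter> (X \<union> E) = {}" "U \<inter> G = {}" "(X \<union> E) \<inter> G = {}" using disj G by blast+
      show "mixed tp (U \<union> (X \<union> E) \<union> G) \<rho>o" using K by (simp add: XEU)
    qed
    then show ?thesis unfolding XEU by (rule separable_swap)
  qed
  moreover have "supp tp (X \<union> E \<union> U) ?\<rho> \<subseteq> qin tp (X \<union> E \<union> U) W S"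
    by (rule supp_ptrace[OF G K WV S supp])
  moreover have "ptrace tp X (E \<union> U) ?\<rho> = \<rho>"
    using ptrace_ptrace_ghosts[OF K] tr by simp
  ultimately show ?thesis unfolding satisfies_def by blast
qed

end

lemma satisfies_restrict_ghosts:
  assumes ne: "\<forall>v. tp v \<noteq> {}"
    and disj: "X \<inter> E = {}" "X \<inter> U = {}" "E \<inter> U = {}"
    and W: "W - X \<subseteq> E \<union> U" and S: "S \<subseteq> l2 tp W"
  shows "satisfies tp X E U (qin tp (X \<union> E \<union> U) W S) \<rho>
    \<longleftrightarrow> satisfies tp X (E \<inter> W) (U \<inter> W) (qin tp (X \<union> (E \<inter> W) \<union> (U \<inter> W)) W S) \<rho>"
proof -
  let ?E = "E \<inter> W" and ?U = "U \<inter> W"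
  have disj0: "X \<inter> ?E = {}" "X \<inter> ?U = {}" "?E \<inter> ?U = {}"
    and GE: "(X \<union> ?E \<union> ?U) \<inter> (E - W) = {}" and W0: "W \<subseteq> X \<union> ?E \<union> ?U"
    using disj W by blast+
  have disj1: "X \<inter> (?E \<union> (E - W)) = {}" "X \<inter> ?U = {}" "(?E \<union> (E - W)) \<inter> ?U = {}"
    and GU: "(X \<union> (?E \<union> (E - W)) \<union> ?U) \<inter> (U - W) = {}" and W1: "W \<subseteq> X \<union> (?E \<union> (E - W)) \<union> ?U"
    using disj W by blast+
  have E: "?E \<union> (E - W) = E" and U: "?U \<union> (U - W) = U" by blast+
  show ?thesis
  proof
    assume "satisfies tp X E U (qin tp (X \<union> E \<union> U) W S) \<rho>"
    then have "satisfies tp X (?E \<union> (E - W)) (?U \<union> (U - W)) (qin tp (X \<union> (?E \<union> (E - W)) \<union> (?U \<union> (U - W))) W S) \<rho>"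
      by (simp only: E U)
    then have "satisfies tp X (?E \<union> (E - W)) ?U (qin tp (X \<union> (?E \<union> (E - W)) \<union> ?U) W S) \<rho>"
      by (rule satisfies_remove_unentangled[OF disj1 GU W1 S])
    then show "satisfies tp X ?E ?U (qin tp (X \<union> ?E \<union> ?U) W S) \<rho>"
      by (rule satisfies_remove_entangled[OF disj0 GE W0 S])
  next
    assume "satisfies tp X ?E ?U (qin tp (X \<union> ?E \<union> ?U) W S) \<rho>"
    then have "satisfies tp X (?E \<union> (E - W)) ?U (qin tp (X \<union> (?E \<union> (E - W)) \<union> ?U) W S) \<rho>"
      by (rule satisfies_add_entangled[OF disj0 GE W0 S ne])
    then have "satisfies tp X (?E \<union> (E - W)) (?U \<union> (U - W)) (qin tp (X \<union> (?E \<union> (E - W)) \<union> (?U \<union> (U - W))) W S) \<rho>"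
      by (rule satisfies_add_unentangled[OF disj1 GU W1 S ne])
    then show "satisfies tp X E U (qin tp (X \<union> E \<union> U) W S) \<rho>"
      by (simp only: E U)
  qed
qed

theorem lemma3:
  fixes tp :: "'v \<Rightarrow> 'val set" and kind :: "'v \<Rightarrow> vkind"
    and X E1 U1 E2 U2 W :: "'v set"
    and S :: "('v,'val) qvec set" and \<rho> :: "('v,'val) qop"
  assumes types_nonempty: "\<forall>v. tp v \<noteq> {}"
    and X_prog: "\<forall>x\<in>X. kind x = Program"
    and E1_ent: "\<forall>x\<in>E1. kind x = Entangled" and E2_ent: "\<forall>x\<in>E2. kind x = Entangled"
    and U1_unent: "\<forall>x\<in>U1. kind x = Unentangled" and U2_unent: "\<forall>x\<in>U2. kind x = Unentangled"
    and \<rho>_mixed: "mixed tp X \<rho>"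
    and S_pred: "csubspace tp W S"
    and W1: "W - X \<subseteq> E1 \<union> U1"
    and W2: "W - X \<subseteq> E2 \<union> U2"
  shows "satisfies tp X E1 U1 (qin tp (X \<union> E1 \<union> U1) W S) \<rho>
     \<longleftrightarrow> satisfies tp X E2 U2 (qin tp (X \<union> E2 \<union> U2) W S) \<rho>"
proof -
  have S: "S \<subseteq> l2 tp W" using S_pred by (rule csubspace_l2)
  have disj1: "X \<inter> E1 = {}" "X \<inter> U1 = {}" "E1 \<inter> U1 = {}" and disj2: "X \<inter> E2 = {}" "X \<inter> U2 = {}" "E2 \<inter> U2 = {}"
    and cross: "E1 \<inter> U2 = {}" "E2 \<inter> U1 = {}"
    using X_prog E1_ent E2_ent U1_unent U2_unent by fastforce+
  have "E1 \<inter> W = E2 \<inter> W" "U1 \<inter> W = U2 \<inter> W"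
    using W1 W2 disj1 disj2 cross by blast+
  then show ?thesis
    using satisfies_restrict_ghosts[OF types_nonempty disj1 W1 S] satisfies_restrict_ghosts[OF types_nonempty disj2 W2 S]
    by simp
qed

end
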